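(* Let $\Omega\subset\mathbb{R}^n$ be open and $V$ a distribution of $k$-planes on $\Omega$ spanned by $v=v_1\wedge\dots\wedge v_k$ with $v_1,\dots,v_k$ $C^1$ vectorfields, linearly independent at every point. For every $x\in\Omega$ the following are equivalent: (i) $V$ is involutive at $x$; (ii) $[v_i,v_j](x)\in V(x)$ for all $1\le i,j\le k$, or equivalently $\mathrm{div}(v_i\wedge v_j)(x)\in V(x)$ for all $1\le i,j\le k$; (iii) $\mathrm{span}(\mathrm{div}\,v(x))\subset V(x)$; (iv) $v(x)\wedge\big((\mathrm{div}\,v(x))\llcorner\mathrm{d}x_{\mathbf i}\big)=0$ for every multi-index $\mathbf i=(i_1<\dots<i_{k-2})$, where $\mathrm{d}x_{\mathbf i}=\mathrm{d}x_{i_1}\wedge\dots\wedge\mathrm{d}x_{i_{k-2}}$.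
   Context: $[w,w'](x)=\mathrm{d}_xw(w'(x))-\mathrm{d}_xw'(w(x))$. $V$ is involutive at $x$ if $[w,w'](x)\in V(x)$ for all $C^1$ vectorfields $w,w'$ tangent to $V$ (i.e. $w(y),w'(y)\in V(y)$ for all $y$). $\mathrm{span}$ of an $h$-vector $u$ is the smallest subspace $Z$ with $u\in\Lambda_h(Z)$. Interior product: for a $k$-vector $u$ and $h$-covector $\alpha$, $h\le k$, $u\llcorner\alpha$ is the $(k-h)$-vector with $\langle u\llcorner\alpha,\beta\rangle=\langle u,\alpha\wedge\beta\rangle$. Divergence of a $C^1$ $k$-vectorfield: $\mathrm{div}\,v=\sum_j\frac{\partial v}{\partial x_j}\llcorner\mathrm{d}x_j$. *)

theory Defs
  imports "HOL-Analysis.Analysis"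
begin

text \<open>Multivectors (and multi-covectors) on the Euclidean space real^('n::{finite,linorder}) are represented by
their coefficients with respect to the standard basis e_I = e_{i_1} wedge ... wedge e_{i_h},
i_1 < ... < i_h, i.e. as vectors in real^(('n::{finite,linorder}) set). The index type ('n::{finite,linorder}) is finite and linearly
ordered (the order gives the ordering of coordinates).\<close>

type_synonym 'n mvec = "real ^ ('n set)"

definition sgn_pair :: "('n::{finite,linorder}) set \<Rightarrow> ('n::{finite,linorder}) set \<Rightarrow> real" where
  "sgn_pair I J = (-1) ^ card {(i, j). i \<in> I \<and> j \<in> J \<and> j < i}"

definition wedge :: "('n::{finite,linorder}) mvec \<Rightarrow> ('n::{finite,linorder}) mvec \<Rightarrow> ('n::{finite,linorder}) mvec" where
  "wedge u w = (\<chi> K. \<Sum>I\<in>Pow K. u $ I * w $ (K - I) * sgn_pair I (K - I))"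

definition mv_one :: "('n::{finite,linorder}) mvec" where
  "mv_one = (\<chi> I. if I = {} then 1 else 0)"

definition vec_mv :: "real ^ ('n::{finite,linorder}) \<Rightarrow> ('n::{finite,linorder}) mvec" where
  "vec_mv w = (\<chi> I. if card I = 1 then w $ (the_elem I) else 0)"

definition wedge_list :: "('n::{finite,linorder}) mvec list \<Rightarrow> ('n::{finite,linorder}) mvec" where
  "wedge_list us = foldr wedge us mv_one"

definition dx :: "('n::{finite,linorder}) \<Rightarrow> ('n::{finite,linorder}) mvec" where
  "dx i = vec_mv (axis i 1)"

definition dxI :: "('n::{finite,linorder}) set \<Rightarrow> ('n::{finite,linorder}) mvec" where
  "dxI I = wedge_list (map dx (sorted_list_of_set I))"

text \<open>Duality pairing and interior product: the coefficient formula below is exactly the unique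
multivector with  pairing (u interior alpha) beta = pairing u (alpha wedge beta).\<close>
definition pairing :: "('n::{finite,linorder}) mvec \<Rightarrow> ('n::{finite,linorder}) mvec \<Rightarrow> real" where
  "pairing u \<alpha> = (\<Sum>I\<in>UNIV. u $ I * \<alpha> $ I)"

definition mv_interior :: "('n::{finite,linorder}) mvec \<Rightarrow> ('n::{finite,linorder}) mvec \<Rightarrow> ('n::{finite,linorder}) mvec" where
  "mv_interior u \<alpha> = (\<chi> J. \<Sum>I\<in>Pow (UNIV - J). \<alpha> $ I * sgn_pair I J * u $ (I \<union> J))"

definition Lambda :: "nat \<Rightarrow> (real ^ ('n::{finite,linorder})) set \<Rightarrow> ('n::{finite,linorder}) mvec set" where
  "Lambda h Z = span {wedge_list (map vec_mv ws) | ws. length ws = h \<and> set ws \<subseteq> Z}"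

definition mv_span :: "nat \<Rightarrow> ('n::{finite,linorder}) mvec \<Rightarrow> (real ^ ('n::{finite,linorder})) set" where
  "mv_span h u = \<Inter> {Z. subspace Z \<and> u \<in> Lambda h Z}"

definition partial :: "(real ^ ('n::{finite,linorder}) \<Rightarrow> real) \<Rightarrow> ('n::{finite,linorder}) \<Rightarrow> real ^ ('n::{finite,linorder}) \<Rightarrow> real" where
  "partial f j x = frechet_derivative f (at x) (axis j 1)"

definition mv_div :: "(real ^ ('n::{finite,linorder}) \<Rightarrow> ('n::{finite,linorder}) mvec) \<Rightarrow> real ^ ('n::{finite,linorder}) \<Rightarrow> ('n::{finite,linorder}) mvec" where
  "mv_div u x = (\<Sum>j\<in>UNIV. mv_interior (\<chi> I. partial (\<lambda>y. u y $ I) j x) (dx j))"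

definition C1_on :: "(real ^ (('n::{finite,linorder}))) set \<Rightarrow> (real ^ ('n::{finite,linorder}) \<Rightarrow> real ^ ('n::{finite,linorder})) \<Rightarrow> bool" where
  "C1_on S w \<longleftrightarrow> (\<exists>w'. (\<forall>x\<in>S. (w has_derivative blinfun_apply (w' x)) (at x)) \<and> continuous_on S w')"

definition lie_bracket :: "(real ^ (('n::{finite,linorder})) \<Rightarrow> real ^ ('n::{finite,linorder})) \<Rightarrow> (real ^ ('n::{finite,linorder}) \<Rightarrow> real ^ ('n::{finite,linorder})) \<Rightarrow> real ^ ('n::{finite,linorder}) \<Rightarrow> real ^ ('n::{finite,linorder})" where
  "lie_bracket w w' x = frechet_derivative w (at x) (w' x) - frechet_derivative w' (at x) (w x)"

definition involutive_at ::
  "(real ^ (('n::{finite,linorder}))) set \<Rightarrow> (real ^ ('n::{finite,linorder}) \<Rightarrow> (real ^ ('n::{finite,linorder})) set) \<Rightarrow> real ^ ('n::{finite,linorder}) \<Rightarrow> bool" where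
  "involutive_at \<Omega> V x \<longleftrightarrow>
     (\<forall>w w'. C1_on \<Omega> w \<and> C1_on \<Omega> w' \<and> (\<forall>y\<in>\<Omega>. w y \<in> V y \<and> w' y \<in> V y)
        \<longrightarrow> lie_bracket w w' x \<in> V x)"

end

theory Submission
  imports Defs
begin

text \<open>Write sections of \<open>V\<close> in the frame, \<open>w = \<Sum> f\<^sub>i v\<^sub>i\<close>. The coefficients are continuous at
  \<open>x\<close> but perhaps not differentiable; still, for a covector \<open>\<gamma>\<close> annihilating \<open>V(x)\<close>, the
  function \<open>\<gamma> \<bullet> w\<close> differs from \<open>\<Sum> f\<^sub>i(x) (\<gamma> \<bullet> v\<^sub>i)\<close> by
  \<open>\<Sum> (f\<^sub>i(y) - f\<^sub>i(x)) (\<gamma> \<bullet> (v\<^sub>i(y) - v\<^sub>i(x))) = o(|y - x|)\<close>. Hence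
  \<open>\<gamma> \<bullet> [w, w'](x) = \<Sum> f\<^sub>i(x) f'\<^sub>j(x) (\<gamma> \<bullet> [v\<^sub>i, v\<^sub>j](x))\<close>, which gives (i) \<open>\<longleftrightarrow>\<close> (ii).

  For the multivector conditions, the Leibniz rule
  \<open>div (a \<and> H) = (div a) H + L\<^sub>a H - a \<and> div H\<close> yields
  \<open>div (v\<^sub>i \<and> v\<^sub>j) = (div v\<^sub>i) v\<^sub>j - (div v\<^sub>j) v\<^sub>i - [v\<^sub>i, v\<^sub>j]\<close> and, by induction, shows that the
  contraction of \<open>div v(x)\<close> with a covector \<open>\<gamma>\<close> annihilating \<open>V(x)\<close> is a combination of
  independent \<open>(k-2)\<close>-vectors with coefficients \<open>\<gamma> \<bullet> [v\<^sub>i, v\<^sub>j](x)\<close>. So the brackets lie in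
  \<open>V(x)\<close> iff all these contractions vanish, iff all vectors \<open>div v(x) \<llcorner> dx\<^sub>J\<close> lie in \<open>V(x)\<close>.
  The latter says \<open>span (div v(x)) \<subseteq> V(x)\<close>, and, since \<open>v(x) \<and> z = 0\<close> characterises
  \<open>z \<in> V(x)\<close>, it is also condition (iv).\<close>

section \<open>Signs\<close>

lemma sgn_pair_empty [simp]: "sgn_pair {} B = 1" "sgn_pair A {} = 1"
  by (simp_all add: sgn_pair_def)

lemma sgn_pair_squared: "sgn_pair A B * sgn_pair A B = 1"
  by (simp add: sgn_pair_def flip: power_add)

lemma sgn_pair_Un_right:
  assumes "B \<inter> C = {}"
  shows "sgn_pair A (B \<union> C) = sgn_pair A B * sgn_pair A C"
proof -
  have split: "{(i, j). i \<in> A \<and> j \<in> B \<union> C \<and> j < i} =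
     {(i, j). i \<in> A \<and> j \<in> B \<and> j < i} \<union> {(i, j). i \<in> A \<and> j \<in> C \<and> j < i}" by auto
  have "card ({(i, j). i \<in> A \<and> j \<in> B \<and> j < i} \<union> {(i, j). i \<in> A \<and> j \<in> C \<and> j < i})
     = card {(i, j). i \<in> A \<and> j \<in> B \<and> j < i} + card {(i, j). i \<in> A \<and> j \<in> C \<and> j < i}"
    by (rule card_Un_disjoint) (use assms in auto)
  then show ?thesis unfolding sgn_pair_def split by (simp add: power_add)
qed

lemma sgn_pair_insert_right: "p \<notin> M \<Longrightarrow> sgn_pair A (insert p M) = sgn_pair A {p} * sgn_pair A M"
  using sgn_pair_Un_right[of "{p}" M A] by simp

lemma sgn_pair_singleton_swap:
  fixes p :: "'n::{finite,linorder}"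
  assumes "p \<notin> J"
  shows "sgn_pair {p} J * sgn_pair J {p} = (-1) ^ card J"
proof -
  have below: "{(i, j). i \<in> {p} \<and> j \<in> J \<and> j < i} = (\<lambda>j. (p, j)) ` {j\<in>J. j < p}" by auto
  have above: "{(i, j). i \<in> J \<and> j \<in> {p} \<and> j < i} = (\<lambda>j. (j, p)) ` {j\<in>J. p < j}" by auto
  have "J = {j\<in>J. j < p} \<union> {j\<in>J. p < j}" using assms by auto (metis linorder_neqE)
  then have "card J = card {j\<in>J. j < p} + card {j\<in>J. p < j}"
    by (metis (no_types, lifting) card_Un_disjoint disjoint_iff finite less_asym mem_Collect_eq)
  moreover have "card {(i, j). i \<in> {p} \<and> j \<in> J \<and> j < i} = card {j\<in>J. j < p}"
    unfolding below by (rule card_image) (auto simp: inj_on_def)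
  moreover have "card {(i, j). i \<in> J \<and> j \<in> {p} \<and> j < i} = card {j\<in>J. p < j}"
    unfolding above by (rule card_image) (auto simp: inj_on_def)
  ultimately show ?thesis unfolding sgn_pair_def by (simp add: power_add)
qed

lemma sgn_pair_singleton_commute:
  fixes p :: "'n::{finite,linorder}"
  assumes "p \<notin> J"
  shows "sgn_pair {p} J = (-1) ^ card J * sgn_pair J {p}"
proof -
  have "sgn_pair {p} J * (sgn_pair J {p} * sgn_pair J {p}) = (-1) ^ card J * sgn_pair J {p}"
    using sgn_pair_singleton_swap[OF assms] by (simp add: mult.assoc[symmetric])
  then show ?thesis by (simp add: sgn_pair_squared)
qed

lemma sgn_pair_singletons_anti:
  fixes r s :: "'n::{finite,linorder}"
  assumes "r \<noteq> s"
  shows "sgn_pair {r} {s} = - sgn_pair {s} {r}"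
  using sgn_pair_singleton_commute[of r "{s}"] assms by simp

lemma sgn_pair_remove_two_anti:
  fixes r s :: "'n::{finite,linorder}"
  assumes "r \<noteq> s" "r \<in> K" "s \<in> K"
  shows "sgn_pair {r} (K - {r}) * sgn_pair {s} (K - {r} - {s}) =
         - (sgn_pair {s} (K - {s}) * sgn_pair {r} (K - {s} - {r}))"
proof -
  define M where "M = K - {r} - {s}"
  have rM: "r \<notin> M" and sM: "s \<notin> M" unfolding M_def by auto
  have "K - {r} = insert s M" "K - {s} = insert r M" "K - {s} - {r} = M"
    using assms unfolding M_def by auto
  moreover have "sgn_pair {r} (insert s M) = sgn_pair {r} {s} * sgn_pair {r} M"
    using sM by (rule sgn_pair_insert_right)
  moreover have "sgn_pair {s} (insert r M) = sgn_pair {s} {r} * sgn_pair {s} M"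
    using rM by (rule sgn_pair_insert_right)
  ultimately show ?thesis
    unfolding M_def[symmetric] using sgn_pair_singletons_anti[OF assms(1)] by simp
qed

lemma sgn_pair_insert_remove:
  fixes p r :: "'n::{finite,linorder}"
  assumes "p \<notin> J" "r \<in> J"
  shows "sgn_pair {p} J * sgn_pair {r} (insert p (J - {r})) =
         - (sgn_pair {r} (J - {r}) * sgn_pair {p} (J - {r}))"
proof -
  have J: "J = insert r (J - {r})" and pr: "p \<noteq> r" using assms by auto
  have "sgn_pair {p} (insert r (J - {r})) = sgn_pair {p} {r} * sgn_pair {p} (J - {r})"
    by (rule sgn_pair_insert_right) simp
  moreover have "sgn_pair {r} (insert p (J - {r})) = sgn_pair {r} {p} * sgn_pair {r} (J - {r})"
    by (rule sgn_pair_insert_right) (use assms in simp)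
  ultimately have "sgn_pair {p} J * sgn_pair {r} (insert p (J - {r}))
      = (sgn_pair {p} {r} * sgn_pair {r} {p}) * (sgn_pair {r} (J - {r}) * sgn_pair {p} (J - {r}))"
    by (subst J) (simp only: mult_ac)
  moreover have "sgn_pair {p} {r} * sgn_pair {r} {p} = -1"
    using sgn_pair_singletons_anti[OF pr] sgn_pair_squared[of "{r}" "{p}"] by simp
  ultimately show ?thesis by simp
qed

section \<open>Exterior and interior products with vectors\<close>

lemma vec_mv_nth: "vec_mv a $ I = (if card I = 1 then a $ the_elem I else 0)"
  by (simp add: vec_mv_def)

lemma mv_one_nth: "mv_one $ I = (if I = {} then 1 else 0)"
  by (simp add: mv_one_def)

lemma wedge_vec_mv_left_nth:
  "wedge (vec_mv a) w $ K = (\<Sum>r\<in>K. a $ r * w $ (K - {r}) * sgn_pair {r} (K - {r}))"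
proof -
  have "wedge (vec_mv a) w $ K =
      (\<Sum>I\<in>Pow K. (if card I = 1 then a $ the_elem I else 0) * w $ (K - I) * sgn_pair I (K - I))"
    by (simp add: wedge_def vec_mv_def)
  also have "\<dots> = (\<Sum>I\<in>(\<lambda>r. {r}) ` K.
      (if card I = 1 then a $ the_elem I else 0) * w $ (K - I) * sgn_pair I (K - I))"
    by (rule sum.mono_neutral_right) (auto simp: card_1_singleton_iff)
  also have "\<dots> = (\<Sum>r\<in>K. a $ r * w $ (K - {r}) * sgn_pair {r} (K - {r}))"
    by (subst sum.reindex) (auto simp: inj_on_def)
  finally show ?thesis .
qed

lemma wedge_vec_mv_right_nth:
  "wedge w (vec_mv z) $ K = (\<Sum>r\<in>K. w $ (K - {r}) * z $ r * sgn_pair (K - {r}) {r})"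
proof -
  have "wedge w (vec_mv z) $ K =
      (\<Sum>I\<in>Pow K. w $ I * (if card (K - I) = 1 then z $ the_elem (K - I) else 0) * sgn_pair I (K - I))"
    by (simp add: wedge_def vec_mv_def)
  also have "\<dots> = (\<Sum>I\<in>(\<lambda>r. K - {r}) ` K.
      w $ I * (if card (K - I) = 1 then z $ the_elem (K - I) else 0) * sgn_pair I (K - I))"
  proof (rule sum.mono_neutral_right)
    show "\<forall>I\<in>Pow K - (\<lambda>r. K - {r}) ` K.
        w $ I * (if card (K - I) = 1 then z $ the_elem (K - I) else 0) * sgn_pair I (K - I) = 0"
      by (auto simp: card_1_singleton_iff)
  qed auto
  also have "\<dots> = (\<Sum>r\<in>K. w $ (K - {r}) * z $ r * sgn_pair (K - {r}) {r})"
  proof -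
    have "inj_on (\<lambda>r. K - {r}) K" by (auto simp: inj_on_def)
    then show ?thesis
      by (simp add: sum.reindex o_def Diff_Diff_Int Int_absorb1 cong: sum.cong)
  qed
  finally show ?thesis .
qed

lemma interior_vec_mv_nth:
  "mv_interior w (vec_mv \<theta>) $ J = (\<Sum>p\<in>-J. \<theta> $ p * sgn_pair {p} J * w $ (insert p J))"
proof -
  have "mv_interior w (vec_mv \<theta>) $ J =
      (\<Sum>I\<in>Pow (UNIV - J). (if card I = 1 then \<theta> $ the_elem I else 0) * sgn_pair I J * w $ (I \<union> J))"
    by (simp add: mv_interior_def vec_mv_def)
  also have "\<dots> = (\<Sum>I\<in>(\<lambda>r. {r}) ` (-J).
      (if card I = 1 then \<theta> $ the_elem I else 0) * sgn_pair I J * w $ (I \<union> J))"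
    by (rule sum.mono_neutral_right) (auto simp: card_1_singleton_iff)
  also have "\<dots> = (\<Sum>p\<in>-J. \<theta> $ p * sgn_pair {p} J * w $ (insert p J))"
    by (subst sum.reindex) (auto simp: inj_on_def)
  finally show ?thesis .
qed

lemma wedge_vec_mv_one: "wedge (vec_mv a) mv_one = vec_mv a"
proof (rule vec_eq_iff[THEN iffD2], rule allI)
  fix K :: "'a set"
  show "wedge (vec_mv a) mv_one $ K = vec_mv a $ K"
  proof (cases "card K = 1")
    case True
    then obtain r where "K = {r}" by (auto simp: card_1_singleton_iff)
    then show ?thesis by (simp add: wedge_vec_mv_left_nth mv_one_nth vec_mv_nth)
  next
    case False
    have "K - {r} \<noteq> {}" if "r \<in> K" for r
      using False that
      by (metis card.empty card.insert empty_iff finite.intros(1) insert_Diff One_nat_def)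
    then have "(\<Sum>r\<in>K. a $ r * mv_one $ (K - {r}) * sgn_pair {r} (K - {r})) = 0"
      by (intro sum.neutral) (simp add: mv_one_nth)
    then show ?thesis using False by (simp add: wedge_vec_mv_left_nth vec_mv_nth)
  qed
qed

lemma interior_mv_one: "mv_interior mv_one (vec_mv \<theta>) = 0"
  by (simp add: vec_eq_iff interior_vec_mv_nth mv_one_nth)

lemma vec_mv_eq_iff [simp]: "vec_mv a = vec_mv b \<longleftrightarrow> a = b"
proof
  assume "vec_mv a = vec_mv b"
  then have "vec_mv a $ {i} = vec_mv b $ {i}" for i by simp
  then show "a = b" by (simp add: vec_eq_iff vec_mv_nth)
qed simp

lemma wedge_add_left: "wedge (u + u') w = wedge u w + wedge u' w"
  by (simp add: wedge_def vec_eq_iff sum.distrib algebra_simps)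
lemma wedge_add_right: "wedge u (w + w') = wedge u w + wedge u w'"
  by (simp add: wedge_def vec_eq_iff sum.distrib algebra_simps)
lemma wedge_scale_left: "wedge (c *\<^sub>R u) w = c *\<^sub>R wedge u w"
  by (simp add: wedge_def vec_eq_iff sum_distrib_left algebra_simps)
lemma wedge_scale_right: "wedge u (c *\<^sub>R w) = c *\<^sub>R wedge u w"
  by (simp add: wedge_def vec_eq_iff sum_distrib_left algebra_simps)
lemma wedge_zero [simp]: "wedge 0 w = 0" "wedge u 0 = 0"
  by (simp_all add: wedge_def vec_eq_iff)
lemma wedge_diff_left: "wedge (u - u') w = wedge u w - wedge u' w"
  by (simp add: wedge_def vec_eq_iff sum_subtractf algebra_simps)
lemma wedge_diff_right: "wedge u (w - w') = wedge u w - wedge u w'"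
  by (simp add: wedge_def vec_eq_iff sum_subtractf algebra_simps)
lemma wedge_sum_right: "wedge u (\<Sum>i\<in>S. f i) = (\<Sum>i\<in>S. wedge u (f i))"
  by (induction S rule: infinite_finite_induct) (simp_all add: wedge_add_right)

lemma interior_add: "mv_interior (u + u') a = mv_interior u a + mv_interior u' a"
  by (simp add: mv_interior_def vec_eq_iff sum.distrib algebra_simps)
lemma interior_scale: "mv_interior (c *\<^sub>R u) a = c *\<^sub>R mv_interior u a"
  by (simp add: mv_interior_def vec_eq_iff sum_distrib_left algebra_simps)
lemma interior_diff: "mv_interior (u - u') a = mv_interior u a - mv_interior u' a"
  by (simp add: mv_interior_def vec_eq_iff sum_subtractf algebra_simps)
lemma interior_zero [simp]: "mv_interior 0 a = 0" "mv_interior u 0 = 0"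
  by (simp_all add: mv_interior_def vec_eq_iff)

lemma linear_wedge_right: "linear (wedge u)"
  by (rule linearI) (simp_all add: wedge_add_right wedge_scale_right)
lemma linear_wedge_left: "linear (\<lambda>u. wedge u w)"
  by (rule linearI) (simp_all add: wedge_add_left wedge_scale_left)
lemma linear_interior: "linear (\<lambda>u. mv_interior u a)"
  by (rule linearI) (simp_all add: interior_add interior_scale)
lemma linear_vec_mv: "linear vec_mv"
  by (rule linearI) (simp_all add: vec_mv_def vec_eq_iff)
lemma linear_wedge_vec_mv_left: "linear (\<lambda>z. wedge (vec_mv z) w)"
  using linear_compose[OF linear_vec_mv linear_wedge_left[of w]] by (simp add: o_def)

lemma wedge_vec_mv_anticommute:
  "wedge (vec_mv p) (wedge (vec_mv q) X) = - wedge (vec_mv q) (wedge (vec_mv p) X)"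
proof (rule vec_eq_iff[THEN iffD2], rule allI)
  fix K :: "'a set"
  define F where "F r s = p $ r * q $ s * X $ (K - {r} - {s}) *
      (sgn_pair {r} (K - {r}) * sgn_pair {s} (K - {r} - {s}))" for r s
  have pq: "wedge (vec_mv p) (wedge (vec_mv q) X) $ K = (\<Sum>r\<in>K. \<Sum>s\<in>K - {r}. F r s)"
    unfolding wedge_vec_mv_left_nth F_def by (simp add: sum_distrib_left sum_distrib_right algebra_simps)
  have "wedge (vec_mv q) (wedge (vec_mv p) X) $ K = (\<Sum>s\<in>K. \<Sum>r\<in>K - {s}.
      q $ s * p $ r * X $ (K - {s} - {r}) * (sgn_pair {s} (K - {s}) * sgn_pair {r} (K - {s} - {r})))"
    unfolding wedge_vec_mv_left_nth by (simp add: sum_distrib_left sum_distrib_right algebra_simps)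
  also have "\<dots> = (\<Sum>s\<in>K. \<Sum>r\<in>K - {s}. - F r s)"
  proof (intro sum.cong refl)
    fix s r assume "s \<in> K" "r \<in> K - {s}"
    moreover have "K - {s} - {r} = K - {r} - {s}" by auto
    ultimately show "q $ s * p $ r * X $ (K - {s} - {r}) *
        (sgn_pair {s} (K - {s}) * sgn_pair {r} (K - {s} - {r})) = - F r s"
      unfolding F_def using sgn_pair_remove_two_anti[of r s K] by auto
  qed
  also have "\<dots> = - (\<Sum>r\<in>K. \<Sum>s\<in>K - {r}. F r s)"
  proof -
    have "(\<Sum>r\<in>K. \<Sum>s\<in>K - {r}. F r s) = (\<Sum>r\<in>K. \<Sum>s\<in>{s\<in>K. r \<noteq> s}. F r s)"
      by (intro sum.cong refl) auto
    also have "\<dots> = (\<Sum>s\<in>K. \<Sum>r\<in>{r\<in>K. r \<noteq> s}. F r s)"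
      by (rule sum.swap_restrict) auto
    also have "\<dots> = (\<Sum>s\<in>K. \<Sum>r\<in>K - {s}. F r s)"
      by (intro sum.cong refl) auto
    finally show ?thesis by (simp add: sum_negf)
  qed
  finally show "wedge (vec_mv p) (wedge (vec_mv q) X) $ K = (- wedge (vec_mv q) (wedge (vec_mv p) X)) $ K"
    by (simp add: pq)
qed

lemma wedge_vec_mv_self: "wedge (vec_mv p) (wedge (vec_mv p) X) = 0"
  using wedge_vec_mv_anticommute[of p p X] by (simp add: eq_neg_iff_add_eq_0 flip: scaleR_2)

lemma interior_wedge_vec_mv_nth:
  "mv_interior (wedge (vec_mv a) w) (vec_mv \<theta>) $ J = (\<Sum>p\<in>-J. \<theta> $ p * a $ p) * w $ J
     - (\<Sum>p\<in>-J. \<Sum>r\<in>J. \<theta> $ p * a $ r * w $ (insert p (J - {r})) *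
          (sgn_pair {r} (J - {r}) * sgn_pair {p} (J - {r})))"
proof -
  have summand: "\<theta> $ p * sgn_pair {p} J *
       (\<Sum>r\<in>insert p J. a $ r * w $ (insert p J - {r}) * sgn_pair {r} (insert p J - {r}))
     = \<theta> $ p * a $ p * w $ J - (\<Sum>r\<in>J. \<theta> $ p * a $ r * w $ (insert p (J - {r})) *
          (sgn_pair {r} (J - {r}) * sgn_pair {p} (J - {r})))"
    if p: "p \<in> -J" for p
  proof -
    have pJ: "p \<notin> J" using p by simp
    have "(\<Sum>r\<in>insert p J. a $ r * w $ (insert p J - {r}) * sgn_pair {r} (insert p J - {r}))
       = a $ p * w $ J * sgn_pair {p} J
         + (\<Sum>r\<in>J. a $ r * w $ (insert p (J - {r})) * sgn_pair {r} (insert p (J - {r})))"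
    proof -
      have "(\<Sum>r\<in>J. a $ r * w $ (insert p J - {r}) * sgn_pair {r} (insert p J - {r}))
         = (\<Sum>r\<in>J. a $ r * w $ (insert p (J - {r})) * sgn_pair {r} (insert p (J - {r})))"
        by (rule sum.cong[OF refl]) (use pJ in \<open>auto simp: insert_Diff_if\<close>)
      then show ?thesis using pJ by simp
    qed
    moreover have "\<theta> $ p * sgn_pair {p} J * (a $ p * w $ J * sgn_pair {p} J) = \<theta> $ p * a $ p * w $ J"
      using sgn_pair_squared[of "{p}" J] by (simp add: algebra_simps)
    moreover have "\<theta> $ p * sgn_pair {p} J *
         (a $ r * w $ (insert p (J - {r})) * sgn_pair {r} (insert p (J - {r})))
       = - (\<theta> $ p * a $ r * w $ (insert p (J - {r})) * (sgn_pair {r} (J - {r}) * sgn_pair {p} (J - {r})))"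
      if "r \<in> J" for r
      using sgn_pair_insert_remove[OF pJ that] by (simp add: algebra_simps)
    ultimately show ?thesis
      by (simp add: distrib_left sum_distrib_left sum_negf)
  qed
  have "mv_interior (wedge (vec_mv a) w) (vec_mv \<theta>) $ J = (\<Sum>p\<in>-J. \<theta> $ p * a $ p * w $ J
      - (\<Sum>r\<in>J. \<theta> $ p * a $ r * w $ (insert p (J - {r})) *
          (sgn_pair {r} (J - {r}) * sgn_pair {p} (J - {r}))))"
    unfolding interior_vec_mv_nth wedge_vec_mv_left_nth by (rule sum.cong[OF refl summand])
  then show ?thesis by (simp add: sum_subtractf sum_distrib_right)
qed

lemma wedge_interior_vec_mv_nth:
  "wedge (vec_mv a) (mv_interior w (vec_mv \<theta>)) $ J = (\<Sum>r\<in>J. a $ r * \<theta> $ r) * w $ J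
     + (\<Sum>r\<in>J. \<Sum>p\<in>-J. \<theta> $ p * a $ r * w $ (insert p (J - {r})) *
          (sgn_pair {r} (J - {r}) * sgn_pair {p} (J - {r})))"
proof -
  have summand: "a $ r * (\<Sum>p\<in>-(J - {r}). \<theta> $ p * sgn_pair {p} (J - {r}) * w $ (insert p (J - {r}))) *
       sgn_pair {r} (J - {r})
     = a $ r * \<theta> $ r * w $ J + (\<Sum>p\<in>-J. \<theta> $ p * a $ r * w $ (insert p (J - {r})) *
          (sgn_pair {r} (J - {r}) * sgn_pair {p} (J - {r})))"
    if r: "r \<in> J" for r
  proof -
    have "-(J - {r}) = insert r (-J)" using r by auto
    then have "(\<Sum>p\<in>-(J - {r}). \<theta> $ p * sgn_pair {p} (J - {r}) * w $ (insert p (J - {r})))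
        = \<theta> $ r * sgn_pair {r} (J - {r}) * w $ J
          + (\<Sum>p\<in>-J. \<theta> $ p * sgn_pair {p} (J - {r}) * w $ (insert p (J - {r})))"
      using r by (simp add: insert_absorb)
    then show ?thesis
      using sgn_pair_squared[of "{r}" "J - {r}"]
      by (simp add: sum_distrib_left sum_distrib_right algebra_simps)
  qed
  have "wedge (vec_mv a) (mv_interior w (vec_mv \<theta>)) $ J = (\<Sum>r\<in>J. a $ r * \<theta> $ r * w $ J
      + (\<Sum>p\<in>-J. \<theta> $ p * a $ r * w $ (insert p (J - {r})) *
          (sgn_pair {r} (J - {r}) * sgn_pair {p} (J - {r}))))"
    unfolding interior_vec_mv_nth wedge_vec_mv_left_nth by (rule sum.cong[OF refl summand])
  then show ?thesis by (simp add: sum.distrib sum_distrib_right)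
qed

lemma interior_wedge_vec_mv:
  "mv_interior (wedge (vec_mv a) w) (vec_mv \<theta>)
     = (a \<bullet> \<theta>) *\<^sub>R w - wedge (vec_mv a) (mv_interior w (vec_mv \<theta>))"
proof (rule vec_eq_iff[THEN iffD2], rule allI)
  fix J :: "'a set"
  have "a \<bullet> \<theta> = (\<Sum>p\<in>J. a $ p * \<theta> $ p) + (\<Sum>p\<in>-J. a $ p * \<theta> $ p)"
    using sum.union_disjoint[of J "-J" "\<lambda>p. a $ p * \<theta> $ p"] by (simp add: inner_vec_def)
  \<comment> \<open>the double sums of the two coordinate formulas cancel\<close>
  then show "mv_interior (wedge (vec_mv a) w) (vec_mv \<theta>) $ J
      = ((a \<bullet> \<theta>) *\<^sub>R w - wedge (vec_mv a) (mv_interior w (vec_mv \<theta>))) $ J"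
    unfolding vector_minus_component vector_scaleR_component
      interior_wedge_vec_mv_nth wedge_interior_vec_mv_nth
    by (subst sum.swap[of _ J]) (simp add: algebra_simps)
qed

section \<open>Wedges of families of vectors\<close>

definition wedge_vecs :: "(nat \<Rightarrow> real ^ 'n::{finite,linorder}) \<Rightarrow> nat list \<Rightarrow> 'n mvec" where
  "wedge_vecs g xs = wedge_list (map (\<lambda>i. vec_mv (g i)) xs)"

lemma wedge_vecs_Nil [simp]: "wedge_vecs g [] = mv_one"
  by (simp add: wedge_vecs_def wedge_list_def)

lemma wedge_vecs_Cons [simp]: "wedge_vecs g (i # xs) = wedge (vec_mv (g i)) (wedge_vecs g xs)"
  by (simp add: wedge_vecs_def wedge_list_def)

lemma mv_one_neq_zero: "mv_one \<noteq> (0 :: 'n::{finite,linorder} mvec)"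
proof
  assume "mv_one = (0 :: 'n mvec)"
  then have "mv_one $ ({} :: 'n set) = 0" by simp
  then show False by (simp add: mv_one_nth)
qed

lemma interior_wedge_vecs_eq_0:
  assumes "\<forall>i\<in>set xs. g i \<bullet> \<theta> = 0"
  shows "mv_interior (wedge_vecs g xs) (vec_mv \<theta>) = 0"
  using assms by (induction xs) (simp_all add: interior_mv_one interior_wedge_vec_mv)

lemma wedge_vec_mv_wedge_vecs_member:
  "i \<in> set xs \<Longrightarrow> wedge (vec_mv (g i)) (wedge_vecs g xs) = 0"
proof (induction xs)
  case (Cons j ys)
  then show ?case
    by (cases "i = j") (auto simp: wedge_vec_mv_self wedge_vec_mv_anticommute[of "g i"])
qed simp

lemma wedge_vec_mv_wedge_vecs_span:
  "z \<in> span (g ` set xs) \<Longrightarrow> wedge (vec_mv z) (wedge_vecs g xs) = 0"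
  by (rule linear_eq_0_on_span[OF linear_wedge_vec_mv_left])
     (auto intro: wedge_vec_mv_wedge_vecs_member)

definition has_dual_family :: "(nat \<Rightarrow> 'a::real_inner) \<Rightarrow> nat set \<Rightarrow> bool" where
  "has_dual_family g S \<longleftrightarrow> (\<forall>p\<in>S. \<exists>\<theta>. g p \<bullet> \<theta> = 1 \<and> (\<forall>q\<in>S - {p}. g q \<bullet> \<theta> = 0))"

lemma has_dual_family_subset: "has_dual_family g S \<Longrightarrow> T \<subseteq> S \<Longrightarrow> has_dual_family g T"
  unfolding has_dual_family_def by blast

lemma has_dual_family_obtain:
  assumes "has_dual_family g S" "p \<in> S"
  obtains \<theta> where "g p \<bullet> \<theta> = 1" "\<forall>q\<in>S - {p}. g q \<bullet> \<theta> = 0"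
  using assms unfolding has_dual_family_def by blast

lemma wedge_vecs_neq_zero:
  assumes "distinct xs" "has_dual_family g (set xs)"
  shows "wedge_vecs g xs \<noteq> 0"
  using assms
proof (induction xs)
  case Nil
  then show ?case by (simp add: mv_one_neq_zero)
next
  case (Cons p ps)
  obtain \<theta> where "g p \<bullet> \<theta> = 1" "\<forall>q\<in>set (p # ps) - {p}. g q \<bullet> \<theta> = 0"
    by (rule has_dual_family_obtain[OF Cons.prems(2)]) auto
  moreover have "\<forall>q\<in>set ps. g q \<bullet> \<theta> = 0" using calculation(2) Cons.prems(1) by auto
  ultimately have "mv_interior (wedge_vecs g (p # ps)) (vec_mv \<theta>) = wedge_vecs g ps"
    by (simp add: interior_wedge_vec_mv interior_wedge_vecs_eq_0)
  moreover have "wedge_vecs g ps \<noteq> 0"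
    using Cons has_dual_family_subset[of g "set (p # ps)" "set ps"] by auto
  ultimately show ?case by auto
qed

definition homogeneous :: "nat \<Rightarrow> 'n::{finite,linorder} mvec \<Rightarrow> bool" where
  "homogeneous d u \<longleftrightarrow> (\<forall>K. card K \<noteq> d \<longrightarrow> u $ K = 0)"

lemma homogeneous_zero: "homogeneous d 0"
  by (simp add: homogeneous_def)

lemma homogeneous_add: "homogeneous d u \<Longrightarrow> homogeneous d w \<Longrightarrow> homogeneous d (u + w)"
  by (simp add: homogeneous_def)

lemma homogeneous_diff: "homogeneous d u \<Longrightarrow> homogeneous d w \<Longrightarrow> homogeneous d (u - w)"
  by (simp add: homogeneous_def)

lemma homogeneous_scale: "homogeneous d u \<Longrightarrow> homogeneous d (c *\<^sub>R u)"
  by (simp add: homogeneous_def)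

lemma homogeneous_mv_one: "homogeneous 0 mv_one"
  by (simp add: homogeneous_def mv_one_nth)

lemma homogeneous_wedge_vec_mv:
  assumes "homogeneous d u"
  shows "homogeneous (Suc d) (wedge (vec_mv a) u)"
  unfolding homogeneous_def
proof (intro allI impI)
  fix K :: "'a set" assume K: "card K \<noteq> Suc d"
  have "u $ (K - {r}) = 0" if "r \<in> K" for r
  proof -
    have "card (K - {r}) = card K - 1" "card K \<ge> 1" using that by (auto simp: Suc_le_eq card_gt_0_iff)
    then have "card (K - {r}) \<noteq> d" using K by linarith
    then show ?thesis using assms unfolding homogeneous_def by simp
  qed
  then show "wedge (vec_mv a) u $ K = 0" unfolding wedge_vec_mv_left_nth by simp
qed

lemma homogeneous_wedge_vecs: "homogeneous (length xs) (wedge_vecs g xs)"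
  by (induction xs) (simp_all add: homogeneous_mv_one homogeneous_wedge_vec_mv)

lemma wedge_vec_mv_commute:
  assumes "homogeneous d w"
  shows "wedge w (vec_mv z) = (-1) ^ d *\<^sub>R wedge (vec_mv z) w"
proof (rule vec_eq_iff[THEN iffD2], rule allI)
  fix K :: "'a set"
  have "w $ (K - {r}) * z $ r * sgn_pair (K - {r}) {r}
      = (-1) ^ d * (z $ r * w $ (K - {r}) * sgn_pair {r} (K - {r}))" if "r \<in> K" for r
  proof (cases "card (K - {r}) = d")
    case True
    then have "sgn_pair {r} (K - {r}) = (-1) ^ d * sgn_pair (K - {r}) {r}"
      using sgn_pair_singleton_commute[of r "K - {r}"] by simp
    then show ?thesis using sgn_pair_squared[of "K - {r}" "{r}"] by (simp add: algebra_simps)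
  next
    case False
    then show ?thesis using assms unfolding homogeneous_def by simp
  qed
  then show "wedge w (vec_mv z) $ K = ((-1) ^ d *\<^sub>R wedge (vec_mv z) w) $ K"
    unfolding wedge_vec_mv_right_nth vector_scaleR_component wedge_vec_mv_left_nth
      real_scaleR_def sum_distrib_left
    by (intro sum.cong refl) auto
qed

lemma separating_covector:
  fixes z :: "'a::euclidean_space"
  assumes "z \<notin> span A"
  obtains \<theta> where "z \<bullet> \<theta> = 1" "\<forall>a\<in>A. a \<bullet> \<theta> = 0"
proof -
  obtain y w where y: "y \<in> span A" and w: "\<And>a. a \<in> span A \<Longrightarrow> orthogonal w a" and z: "z = y + w"
    using orthogonal_subspace_decomp_exists[of A z] by blast
  have "w \<noteq> 0" using assms y z by auto
  moreover have "y \<bullet> w = 0" using w[OF y] by (simp add: orthogonal_def inner_commute)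
  ultimately have "z \<bullet> ((1 / (w \<bullet> w)) *\<^sub>R w) = 1" by (simp add: z inner_add_left)
  moreover have "\<forall>a\<in>A. a \<bullet> ((1 / (w \<bullet> w)) *\<^sub>R w) = 0"
    using w span_base by (simp add: orthogonal_def inner_commute) blast
  ultimately show ?thesis by (rule that)
qed

lemma in_span_image_sum:
  assumes "x \<in> span (g ` T)" "finite T"
  obtains c where "x = (\<Sum>q\<in>T. c q *\<^sub>R g q)"
proof -
  from assms(1) have "\<exists>c. x = (\<Sum>q\<in>T. c q *\<^sub>R g q)"
  proof (induction rule: span_induct_alt)
    case base
    show ?case by (auto intro: exI[of _ "\<lambda>_. 0"])
  next
    case (step a y z)
    then obtain p c where p: "p \<in> T" "y = g p" and z: "z = (\<Sum>q\<in>T. c q *\<^sub>R g q)" by auto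
    have "(\<Sum>q\<in>T. (if q = p then a else 0) *\<^sub>R g q) = (\<Sum>q\<in>T. if q = p then a *\<^sub>R g p else 0)"
      by (rule sum.cong) auto
    then have "a *\<^sub>R y + z = (\<Sum>q\<in>T. (c q + (if q = p then a else 0)) *\<^sub>R g q)"
      using p z assms(2) by (simp add: scaleR_add_left sum.distrib)
    then show ?case by (rule exI[of _ "\<lambda>q. c q + (if q = p then a else 0)"])
  qed
  then show ?thesis using that by blast
qed

lemma has_dual_family_if_independent:
  fixes g :: "nat \<Rightarrow> 'a::euclidean_space"
  assumes indep: "\<forall>c. (\<Sum>i\<in>S. c i *\<^sub>R g i) = 0 \<longrightarrow> (\<forall>i\<in>S. c i = 0)" and "finite S"
  shows "has_dual_family g S"
  unfolding has_dual_family_def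
proof
  fix p assume p: "p \<in> S"
  have "g p \<notin> span (g ` (S - {p}))"
  proof
    assume "g p \<in> span (g ` (S - {p}))"
    then obtain c where c: "g p = (\<Sum>q\<in>S - {p}. c q *\<^sub>R g q)"
      using in_span_image_sum \<open>finite S\<close> by blast
    define c' where "c' q = (if q = p then -1 else c q)" for q
    have "(\<Sum>q\<in>S - {p}. c' q *\<^sub>R g q) = (\<Sum>q\<in>S - {p}. c q *\<^sub>R g q)"
      by (rule sum.cong) (auto simp: c'_def)
    then have "(\<Sum>q\<in>S. c' q *\<^sub>R g q) = - g p + (\<Sum>q\<in>S - {p}. c q *\<^sub>R g q)"
      using p \<open>finite S\<close> by (simp add: sum.remove c'_def)
    then have "c' p = 0" using indep p c by simp
    then show False by (simp add: c'_def)
  qed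
  then obtain \<theta> where "g p \<bullet> \<theta> = 1" "\<forall>a\<in>g ` (S - {p}). a \<bullet> \<theta> = 0"
    by (rule separating_covector)
  then show "\<exists>\<theta>. g p \<bullet> \<theta> = 1 \<and> (\<forall>q\<in>S - {p}. g q \<bullet> \<theta> = 0)" by blast
qed

lemma wedge_wedge_vecs_vec_mv_eq_0_iff:
  assumes "distinct xs" "has_dual_family g (set xs)"
  shows "wedge (wedge_vecs g xs) (vec_mv z) = 0 \<longleftrightarrow> z \<in> span (g ` set xs)"
proof
  assume "z \<in> span (g ` set xs)"
  then show "wedge (wedge_vecs g xs) (vec_mv z) = 0"
    using wedge_vec_mv_commute[OF homogeneous_wedge_vecs, of g xs z] wedge_vec_mv_wedge_vecs_span
    by simp
next
  assume z0: "wedge (wedge_vecs g xs) (vec_mv z) = 0"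
  show "z \<in> span (g ` set xs)"
  proof (rule ccontr)
    assume "z \<notin> span (g ` set xs)"
    then obtain \<theta> where "z \<bullet> \<theta> = 1" "\<forall>i\<in>set xs. g i \<bullet> \<theta> = 0"
      by (auto elim: separating_covector)
    then have "mv_interior (wedge (vec_mv z) (wedge_vecs g xs)) (vec_mv \<theta>) = wedge_vecs g xs"
      by (simp add: interior_wedge_vec_mv interior_wedge_vecs_eq_0)
    moreover have "wedge (vec_mv z) (wedge_vecs g xs) = 0"
      using wedge_vec_mv_commute[OF homogeneous_wedge_vecs, of g xs z] z0 by simp
    ultimately show False using wedge_vecs_neq_zero[OF assms] by simp
  qed
qed

section \<open>The spaces \<open>\<Lambda>\<^sub>h(Z)\<close> and contractions with \<open>dx\<^sub>J\<close>\<close>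

lemma mem_orthogonal_comp_iff: "\<gamma> \<in> Z\<^sup>\<bottom> \<longleftrightarrow> (\<forall>z\<in>Z. z \<bullet> \<gamma> = 0)"
  by (simp add: orthogonal_comp_def orthogonal_def)

lemma Lambda_subspace: "subspace (Lambda h Z)"
  by (simp add: Lambda_def)

lemma wedge_vecs_in_Lambda: "g ` set xs \<subseteq> Z \<Longrightarrow> wedge_vecs g xs \<in> Lambda (length xs) Z"
  unfolding Lambda_def wedge_vecs_def
  by (rule span_base) (auto intro!: exI[of _ "map g xs"] simp: o_def)

lemma wedge_vec_mv_in_Lambda:
  assumes "z \<in> Z" "u \<in> Lambda h Z"
  shows "wedge (vec_mv z) u \<in> Lambda (Suc h) Z"
proof -
  let ?G = "{wedge_list (map vec_mv ws) | ws. length ws = h \<and> set ws \<subseteq> Z}"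
  have "wedge (vec_mv z) ` span ?G = span (wedge (vec_mv z) ` ?G)"
    by (rule linear_span_image[symmetric]) (rule linear_wedge_right)
  also have "\<dots> \<subseteq> Lambda (Suc h) Z"
    unfolding Lambda_def
  proof (rule span_mono, clarify)
    fix ws assume "h = length ws" "set ws \<subseteq> Z"
    then show "\<exists>ws'. wedge (vec_mv z) (wedge_list (map vec_mv ws)) = wedge_list (map vec_mv ws')
        \<and> length ws' = Suc (length ws) \<and> set ws' \<subseteq> Z"
      using assms(1) by (intro exI[of _ "z # ws"]) (simp add: wedge_list_def)
  qed
  finally show ?thesis using assms(2) unfolding Lambda_def by blast
qed

lemma interior_eq_0_if_in_Lambda:
  assumes "\<gamma> \<in> Z\<^sup>\<bottom>" "u \<in> Lambda h Z"
  shows "mv_interior u (vec_mv \<gamma>) = 0"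
proof -
  have "mv_interior (wedge_list (map vec_mv ws)) (vec_mv \<gamma>) = 0" if "set ws \<subseteq> Z" for ws
    using that assms(1)
    by (induction ws)
       (auto simp: wedge_list_def interior_mv_one interior_wedge_vec_mv mem_orthogonal_comp_iff)
  then show ?thesis
    using linear_eq_0_on_span[OF linear_interior _ assms(2)[unfolded Lambda_def]] by blast
qed

text \<open>For \<open>xs = [x\<^sub>1, \<dots>, x\<^sub>l]\<close>, \<open>wedge_omit_sum f g xs\<close> is the alternating sum over \<open>m\<close> of
  \<open>(-1)\<^sup>m\<^sup>-\<^sup>1 f x\<^sub>m\<close> times the wedge of the \<open>g x\<^sub>j\<close>, \<open>j \<noteq> m\<close>: the contraction of
  \<open>wedge_vecs g xs\<close> with a covector taking the value \<open>f x\<^sub>m\<close> on \<open>g x\<^sub>m\<close>. And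
  \<open>wedge_replace_sum F g xs\<close> sums \<open>wedge_vecs g xs\<close> with the \<open>m\<close>-th factor replaced by
  \<open>F x\<^sub>m\<close>, the shape of a Leibniz rule.\<close>

fun wedge_omit_sum :: "(nat \<Rightarrow> real) \<Rightarrow> (nat \<Rightarrow> real ^ 'n::{finite,linorder}) \<Rightarrow> nat list \<Rightarrow> 'n mvec"
where
  "wedge_omit_sum f g [] = 0"
| "wedge_omit_sum f g (i # xs) = f i *\<^sub>R wedge_vecs g xs - wedge (vec_mv (g i)) (wedge_omit_sum f g xs)"

fun wedge_replace_sum ::
  "(nat \<Rightarrow> real ^ 'n::{finite,linorder}) \<Rightarrow> (nat \<Rightarrow> real ^ 'n::{finite,linorder}) \<Rightarrow> nat list \<Rightarrow> 'n mvec"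
where
  "wedge_replace_sum F g [] = 0"
| "wedge_replace_sum F g (i # xs) =
     wedge (vec_mv (F i)) (wedge_vecs g xs) + wedge (vec_mv (g i)) (wedge_replace_sum F g xs)"

lemma wedge_omit_sum_in_Lambda:
  "g ` set xs \<subseteq> Z \<Longrightarrow> wedge_omit_sum f g xs \<in> Lambda (length xs - 1) Z"
proof (induction xs)
  case Nil
  then show ?case by (simp add: subspace_0[OF Lambda_subspace])
next
  case (Cons i xs)
  show ?case
  proof (cases xs)
    case Nil
    then show ?thesis
      using wedge_vecs_in_Lambda[of g "[]" Z] by (simp add: subspace_scale[OF Lambda_subspace])
  next
    case (Cons j js)
    then have "wedge (vec_mv (g i)) (wedge_omit_sum f g xs) \<in> Lambda (length xs) Z"
      using Cons.IH Cons.prems wedge_vec_mv_in_Lambda[of "g i" Z _ "length xs - 1"] by auto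
    moreover have "wedge_vecs g xs \<in> Lambda (length xs) Z"
      using Cons.prems by (intro wedge_vecs_in_Lambda) auto
    ultimately show ?thesis
      by (simp add: subspace_diff[OF Lambda_subspace] subspace_scale[OF Lambda_subspace])
  qed
qed

lemma wedge_replace_sum_in_Lambda:
  "g ` set xs \<subseteq> Z \<Longrightarrow> F ` set xs \<subseteq> Z \<Longrightarrow> wedge_replace_sum F g xs \<in> Lambda (length xs) Z"
proof (induction xs)
  case Nil
  then show ?case by (simp add: subspace_0[OF Lambda_subspace])
next
  case (Cons i xs)
  then have "wedge (vec_mv (F i)) (wedge_vecs g xs) \<in> Lambda (Suc (length xs)) Z"
    and "wedge (vec_mv (g i)) (wedge_replace_sum F g xs) \<in> Lambda (Suc (length xs)) Z"
    by (auto intro: wedge_vec_mv_in_Lambda wedge_vecs_in_Lambda)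
  then show ?case by (simp add: subspace_add[OF Lambda_subspace])
qed

lemma homogeneous_wedge_replace_sum: "homogeneous (length xs) (wedge_replace_sum F g xs)"
  by (induction xs)
     (simp_all add: homogeneous_zero homogeneous_add homogeneous_wedge_vec_mv homogeneous_wedge_vecs)

lemma interior_wedge_replace_sum:
  assumes "\<forall>i\<in>set xs. g i \<bullet> \<gamma> = 0"
  shows "mv_interior (wedge_replace_sum F g xs) (vec_mv \<gamma>) = wedge_omit_sum (\<lambda>i. F i \<bullet> \<gamma>) g xs"
  using assms
  by (induction xs) (simp_all add: interior_add interior_wedge_vec_mv interior_wedge_vecs_eq_0)

lemma wedge_omit_sum_eq_0D:
  assumes "distinct xs" "has_dual_family g (set xs)" "wedge_omit_sum f g xs = 0"
  shows "\<forall>i\<in>set xs. f i = 0"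
  using assms
proof (induction xs)
  case (Cons p ps)
  obtain \<theta> where \<theta>: "g p \<bullet> \<theta> = 1" "\<forall>q\<in>set (p # ps) - {p}. g q \<bullet> \<theta> = 0"
    by (rule has_dual_family_obtain[OF Cons.prems(2)]) auto
  then have ps\<theta>: "\<forall>q\<in>set ps. g q \<bullet> \<theta> = 0" using Cons.prems(1) by auto
  have "\<theta> \<in> (g ` set ps)\<^sup>\<bottom>" using ps\<theta> by (auto simp: mem_orthogonal_comp_iff)
  then have "mv_interior (wedge_omit_sum f g ps) (vec_mv \<theta>) = 0"
    using interior_eq_0_if_in_Lambda wedge_omit_sum_in_Lambda by blast
  then have "mv_interior (wedge_omit_sum f g (p # ps)) (vec_mv \<theta>) = - wedge_omit_sum f g ps"
    using \<theta>(1) ps\<theta>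
    by (simp add: interior_diff interior_scale interior_wedge_vec_mv interior_wedge_vecs_eq_0)
  then have ps0: "wedge_omit_sum f g ps = 0" using Cons.prems(3) by simp
  have dual_ps: "has_dual_family g (set ps)"
    using Cons.prems(2) has_dual_family_subset by (metis set_subset_Cons)
  have "f p *\<^sub>R wedge_vecs g ps = 0" using Cons.prems(3) ps0 by simp
  moreover have "wedge_vecs g ps \<noteq> 0" using wedge_vecs_neq_zero Cons.prems(1) dual_ps by auto
  ultimately have "f p = 0" by simp
  with Cons.IH Cons.prems(1) dual_ps ps0 show ?case by auto
qed simp

lemma wedge_list_dx_nth:
  assumes "sorted_wrt (<) xs"
  shows "wedge_list (map dx xs) $ J = (if J = set xs then 1 else 0)"
  using assms
proof (induction xs arbitrary: J)
  case Nil
  then show ?case by (simp add: wedge_list_def mv_one_nth)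
next
  case (Cons x ys)
  have xy: "\<forall>y\<in>set ys. x < y" and sy: "sorted_wrt (<) ys" using Cons.prems by auto
  have no_inversions: "{(i, j). i \<in> {x} \<and> j \<in> set ys \<and> j < i} = {}" using xy by auto
  have sgn: "sgn_pair {x} (set ys) = 1" unfolding sgn_pair_def no_inversions by simp
  have "wedge_list (map dx (x # ys)) $ J = (\<Sum>r\<in>J. axis x 1 $ r * wedge_list (map dx ys) $ (J - {r})
      * sgn_pair {r} (J - {r}))"
    by (simp add: wedge_list_def dx_def wedge_vec_mv_left_nth)
  also have "\<dots> = (if x \<in> J then wedge_list (map dx ys) $ (J - {x}) * sgn_pair {x} (J - {x}) else 0)"
    by (simp add: axis_def if_distrib if_distribR cong: if_cong)
  also have "\<dots> = (if J = set (x # ys) then 1 else 0)"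
    using Cons.IH[OF sy] sgn xy by auto
  finally show ?case .
qed

lemma dxI_nth: "dxI I $ J = (if J = I then 1 else 0)"
  unfolding dxI_def by (subst wedge_list_dx_nth) simp_all

lemma interior_dxI_nth:
  "mv_interior u (dxI J) $ K = (if J \<inter> K = {} then sgn_pair J K * u $ (J \<union> K) else 0)"
proof -
  have "mv_interior u (dxI J) $ K =
      (\<Sum>I\<in>Pow (UNIV - K). if I = J then sgn_pair J K * u $ (J \<union> K) else 0)"
    unfolding mv_interior_def dxI_nth vec_lambda_beta by (intro sum.cong) auto
  also have "\<dots> = (if J \<inter> K = {} then sgn_pair J K * u $ (J \<union> K) else 0)"
    by (subst sum.delta) auto
  finally show ?thesis .
qed

definition contract_vec :: "'n::{finite,linorder} mvec \<Rightarrow> 'n set \<Rightarrow> real ^ 'n::{finite,linorder}" where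
  "contract_vec u J = (\<chi> p. mv_interior u (dxI J) $ {p})"

lemma interior_vec_mv_nth_contract_vec:
  "mv_interior u (vec_mv \<gamma>) $ J = (-1) ^ card J * (\<gamma> \<bullet> contract_vec u J)"
proof -
  have "\<gamma> \<bullet> contract_vec u J =
      (\<Sum>p\<in>UNIV. \<gamma> $ p * (if J \<inter> {p} = {} then sgn_pair J {p} * u $ (J \<union> {p}) else 0))"
    unfolding inner_vec_def contract_vec_def vec_lambda_beta interior_dxI_nth inner_real_def ..
  also have "\<dots> = (\<Sum>p\<in>-J. \<gamma> $ p * (if J \<inter> {p} = {} then sgn_pair J {p} * u $ (J \<union> {p}) else 0))"
    by (rule sum.mono_neutral_right) auto
  also have "\<dots> = (\<Sum>p\<in>-J. \<gamma> $ p * sgn_pair J {p} * u $ (insert p J))"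
    by (intro sum.cong refl) auto
  finally have contract: "\<gamma> \<bullet> contract_vec u J = (\<Sum>p\<in>-J. \<gamma> $ p * sgn_pair J {p} * u $ (insert p J))" .
  show ?thesis
    unfolding interior_vec_mv_nth contract sum_distrib_left
    by (intro sum.cong refl) (simp add: sgn_pair_singleton_commute)
qed

lemma contract_vec_eq_0:
  assumes "homogeneous h u" "card J + 1 \<noteq> h"
  shows "contract_vec u J = 0"
proof -
  have "card (J \<union> {p}) \<noteq> h" if "J \<inter> {p} = {}" for p
    using that assms(2) by (simp add: card_Un_disjoint)
  then show ?thesis
    using assms(1) by (simp add: vec_eq_iff contract_vec_def interior_dxI_nth homogeneous_def)
qed

lemma interior_dxI_eq_vec_mv_contract_vec:
  assumes "homogeneous (Suc (card J)) u"
  shows "mv_interior u (dxI J) = vec_mv (contract_vec u J)"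
proof (rule vec_eq_iff[THEN iffD2], rule allI)
  fix K :: "'a set"
  show "mv_interior u (dxI J) $ K = vec_mv (contract_vec u J) $ K"
  proof (cases "card K = 1")
    case True
    then obtain p where "K = {p}" by (auto simp: card_1_singleton_iff)
    then show ?thesis by (simp add: vec_mv_nth contract_vec_def)
  next
    case False
    have "u $ (J \<union> K) = 0" if "J \<inter> K = {}"
    proof -
      have "card (J \<union> K) \<noteq> Suc (card J)" using that False by (simp add: card_Un_disjoint)
      then show ?thesis using assms unfolding homogeneous_def by simp
    qed
    then show ?thesis using False by (simp add: interior_dxI_nth vec_mv_nth)
  qed
qed

lemma interior_orthogonal_comp_eq_0_iff:
  fixes Z :: "(real ^ 'n::{finite,linorder}) set"
  assumes "subspace Z"
  shows "(\<forall>\<gamma>\<in>Z\<^sup>\<bottom>. mv_interior u (vec_mv \<gamma>) = 0) \<longleftrightarrow> (\<forall>J. contract_vec u J \<in> Z)"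
proof -
  have "(\<forall>\<gamma>\<in>Z\<^sup>\<bottom>. mv_interior u (vec_mv \<gamma>) = 0) \<longleftrightarrow> (\<forall>J. \<forall>\<gamma>\<in>Z\<^sup>\<bottom>. \<gamma> \<bullet> contract_vec u J = 0)"
    by (auto simp: vec_eq_iff interior_vec_mv_nth_contract_vec)
  also have "\<dots> \<longleftrightarrow> (\<forall>J. contract_vec u J \<in> Z\<^sup>\<bottom>\<^sup>\<bottom>)"
    by (simp add: orthogonal_comp_def orthogonal_def)
  finally show ?thesis by (simp add: orthogonal_comp_self[OF assms])
qed

lemma contract_vec_in_mv_span: "contract_vec u J \<in> mv_span h u"
  unfolding mv_span_def
  using interior_eq_0_if_in_Lambda interior_orthogonal_comp_eq_0_iff by blast

lemma wedge_interior_dxI_eq_0_iff: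
  assumes "homogeneous h u" "distinct xs" "has_dual_family g (set xs)"
  shows "(\<forall>I. card I + 1 = h \<longrightarrow> wedge (wedge_vecs g xs) (mv_interior u (dxI I)) = 0)
     \<longleftrightarrow> (\<forall>J. contract_vec u J \<in> span (g ` set xs))"
proof -
  have "wedge (wedge_vecs g xs) (mv_interior u (dxI I)) = 0 \<longleftrightarrow> contract_vec u I \<in> span (g ` set xs)"
    if "card I + 1 = h" for I
    using interior_dxI_eq_vec_mv_contract_vec[of I u] wedge_wedge_vecs_vec_mv_eq_0_iff assms that
    by simp
  moreover have "contract_vec u J \<in> span (g ` set xs)" if "card J + 1 \<noteq> h" for J
    using contract_vec_eq_0[OF assms(1) that] by (simp add: span_zero)
  ultimately show ?thesis by metis
qed

section \<open>Divergence of multivector fields\<close>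

abbreviation fderiv :: "('a::real_normed_vector \<Rightarrow> 'b::real_normed_vector) \<Rightarrow> 'a \<Rightarrow> 'a \<Rightarrow> 'b" where
  "fderiv f x \<equiv> frechet_derivative f (at x)"

lemma has_derivative_wedge:
  assumes "(F has_derivative F') (at x)" "(G has_derivative G') (at x)"
  shows "((\<lambda>y. wedge (F y) (G y)) has_derivative (\<lambda>h. wedge (F x) (G' h) + wedge (F' h) (G x))) (at x)"
proof -
  have "bounded_bilinear (wedge :: 'n::{finite,linorder} mvec \<Rightarrow> 'n mvec \<Rightarrow> 'n mvec)"
    unfolding bilinear_conv_bounded_bilinear[symmetric] bilinear_def
    using linear_wedge_right linear_wedge_left by blast
  from bounded_bilinear.FDERIV[OF this assms] show ?thesis .
qed

lemma has_derivative_vec_mv: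
  "(a has_derivative a') (at x) \<Longrightarrow> ((\<lambda>y. vec_mv (a y)) has_derivative (\<lambda>h. vec_mv (a' h))) (at x)"
  using bounded_linear.has_derivative linear_conv_bounded_linear linear_vec_mv by blast

lemma differentiable_wedge:
  "F differentiable (at x) \<Longrightarrow> G differentiable (at x) \<Longrightarrow> (\<lambda>y. wedge (F y) (G y)) differentiable (at x)"
  using has_derivative_wedge unfolding differentiable_def by blast

lemma fderiv_wedge:
  assumes "F differentiable (at x)" "G differentiable (at x)"
  shows "fderiv (\<lambda>y. wedge (F y) (G y)) x h = wedge (F x) (fderiv G x h) + wedge (fderiv F x h) (G x)"
  using has_derivative_wedge[OF assms[unfolded frechet_derivative_works]]
  by (simp add: frechet_derivative_at[symmetric])

lemma differentiable_vec_mv: "a differentiable (at x) \<Longrightarrow> (\<lambda>y. vec_mv (a y)) differentiable (at x)"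
  using has_derivative_vec_mv unfolding differentiable_def by blast

lemma fderiv_vec_mv:
  "a differentiable (at x) \<Longrightarrow> fderiv (\<lambda>y. vec_mv (a y)) x h = vec_mv (fderiv a x h)"
  using frechet_derivative_at[OF has_derivative_vec_mv[of a "fderiv a x" x], symmetric]
  by (simp add: frechet_derivative_works)

lemma mv_div_fderiv:
  assumes "H differentiable (at x)"
  shows "mv_div H x = (\<Sum>j\<in>UNIV. mv_interior (fderiv H x (axis j 1)) (dx j))"
proof -
  have "partial (\<lambda>y. H y $ I) j x = fderiv H x (axis j 1) $ I" for I j
  proof -
    have "((\<lambda>y. H y $ I) has_derivative (\<lambda>h. fderiv H x h $ I)) (at x)"
      using bounded_linear.has_derivative[OF bounded_linear_vec_nth] assms frechet_derivative_works
      by blast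
    from frechet_derivative_at[OF this, symmetric] show ?thesis unfolding partial_def by simp
  qed
  then show ?thesis unfolding mv_div_def by (simp add: vec_eq_iff)
qed

lemma linear_axis_expansion:
  assumes "linear L"
  shows "(\<Sum>j\<in>UNIV. x $ j *\<^sub>R L (axis j 1)) = L (x :: real ^ 'n::finite)"
proof -
  have "L x = L (\<Sum>j\<in>UNIV. x $ j *\<^sub>R axis j 1)"
    using basis_expansion[of x] by (simp add: scalar_mult_eq_scaleR)
  then show ?thesis using assms by (simp add: linear_sum linear_scale)
qed

definition vf_div ::
  "(real ^ 'n::{finite,linorder} \<Rightarrow> real ^ 'n::{finite,linorder}) \<Rightarrow> real ^ 'n::{finite,linorder} \<Rightarrow> real"
where
  "vf_div a x = (\<Sum>j\<in>UNIV. fderiv a x (axis j 1) $ j)"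

text \<open>On vector fields it is
  \<open>- lie_bracket a\<close>, since \<open>lie_bracket\<close> carries the opposite of the usual sign.\<close>

definition lie_deriv ::
  "(real ^ 'n::{finite,linorder} \<Rightarrow> real ^ 'n::{finite,linorder})
    \<Rightarrow> (real ^ 'n::{finite,linorder} \<Rightarrow> 'n mvec) \<Rightarrow> real ^ 'n::{finite,linorder} \<Rightarrow> 'n mvec"
where
  "lie_deriv a H x = fderiv H x (a x)
     - (\<Sum>j\<in>UNIV. wedge (vec_mv (fderiv a x (axis j 1))) (mv_interior (H x) (dx j)))"

lemma mv_div_wedge_vec_mv:
  assumes a: "a differentiable (at x)" and H: "H differentiable (at x)"
  shows "mv_div (\<lambda>y. wedge (vec_mv (a y)) (H y)) x
       = vf_div a x *\<^sub>R H x + lie_deriv a H x - wedge (vec_mv (a x)) (mv_div H x)"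
proof -
  have "mv_div (\<lambda>y. wedge (vec_mv (a y)) (H y)) x =
     (\<Sum>j\<in>UNIV. (a x $ j) *\<^sub>R fderiv H x (axis j 1)
       - wedge (vec_mv (a x)) (mv_interior (fderiv H x (axis j 1)) (dx j))
       + ((fderiv a x (axis j 1) $ j) *\<^sub>R H x
       - wedge (vec_mv (fderiv a x (axis j 1))) (mv_interior (H x) (dx j))))"
    using differentiable_vec_mv[OF a] H
    by (simp add: mv_div_fderiv differentiable_wedge fderiv_wedge fderiv_vec_mv[OF a] interior_add
        interior_wedge_vec_mv dx_def inner_axis)
  also have "\<dots> = (\<Sum>j\<in>UNIV. (a x $ j) *\<^sub>R fderiv H x (axis j 1))
       - wedge (vec_mv (a x)) (\<Sum>j\<in>UNIV. mv_interior (fderiv H x (axis j 1)) (dx j))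
       + (\<Sum>j\<in>UNIV. fderiv a x (axis j 1) $ j) *\<^sub>R H x
       - (\<Sum>j\<in>UNIV. wedge (vec_mv (fderiv a x (axis j 1))) (mv_interior (H x) (dx j)))"
    by (simp add: sum.distrib sum_subtractf wedge_sum_right scaleR_sum_left)
  also have "(\<Sum>j\<in>UNIV. (a x $ j) *\<^sub>R fderiv H x (axis j 1)) = fderiv H x (a x)"
    by (rule linear_axis_expansion[OF linear_frechet_derivative[OF H]])
  finally show ?thesis
    unfolding lie_deriv_def vf_div_def mv_div_fderiv[OF H, symmetric] by (simp add: algebra_simps)
qed

lemma lie_deriv_wedge_vec_mv:
  assumes a: "a differentiable (at x)" and b: "b differentiable (at x)" and K: "K differentiable (at x)"
  shows "lie_deriv a (\<lambda>y. wedge (vec_mv (b y)) (K y)) x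
       = wedge (vec_mv (- lie_bracket a b x)) (K x) + wedge (vec_mv (b x)) (lie_deriv a K x)"
proof -
  let ?A = "\<lambda>j. fderiv a x (axis j 1)"
  have "(\<Sum>j\<in>UNIV. wedge (vec_mv (?A j)) (mv_interior (wedge (vec_mv (b x)) (K x)) (dx j)))
      = (\<Sum>j\<in>UNIV. (b x $ j) *\<^sub>R wedge (vec_mv (?A j)) (K x))
        + wedge (vec_mv (b x)) (\<Sum>j\<in>UNIV. wedge (vec_mv (?A j)) (mv_interior (K x) (dx j)))"
    by (simp add: interior_wedge_vec_mv dx_def inner_axis wedge_diff_right wedge_scale_right
        wedge_vec_mv_anticommute[of _ "b x"] sum_subtractf wedge_sum_right sum.distrib)
  also have "(\<Sum>j\<in>UNIV. (b x $ j) *\<^sub>R wedge (vec_mv (?A j)) (K x))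
      = wedge (vec_mv (fderiv a x (b x))) (K x)"
  proof -
    have "linear (\<lambda>h. wedge (vec_mv (fderiv a x h)) (K x))"
      using linear_compose[OF linear_frechet_derivative[OF a] linear_wedge_vec_mv_left]
      by (simp add: o_def)
    from linear_axis_expansion[OF this] show ?thesis .
  qed
  finally have contract:
    "(\<Sum>j\<in>UNIV. wedge (vec_mv (?A j)) (mv_interior (wedge (vec_mv (b x)) (K x)) (dx j)))
      = wedge (vec_mv (fderiv a x (b x))) (K x)
        + wedge (vec_mv (b x)) (\<Sum>j\<in>UNIV. wedge (vec_mv (?A j)) (mv_interior (K x) (dx j)))" .
  have "vec_mv (- lie_bracket a b x) = vec_mv (fderiv b x (a x)) - vec_mv (fderiv a x (b x))"
    unfolding lie_bracket_def using linear_diff[OF linear_vec_mv] linear_neg[OF linear_vec_mv] by simp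
  then have "wedge (vec_mv (fderiv b x (a x))) (K x)
      = wedge (vec_mv (- lie_bracket a b x)) (K x) + wedge (vec_mv (fderiv a x (b x))) (K x)"
    by (simp add: wedge_add_left[symmetric])
  then show ?thesis
    using differentiable_vec_mv[OF b] K
    by (simp add: lie_deriv_def fderiv_wedge fderiv_vec_mv[OF b] contract wedge_diff_right
        wedge_diff_left algebra_simps)
qed

lemma lie_deriv_mv_one: "lie_deriv a (\<lambda>y. mv_one) x = 0"
  by (simp add: lie_deriv_def interior_mv_one dx_def)

lemma differentiable_wedge_vecs:
  "\<forall>i\<in>set xs. v i differentiable (at x) \<Longrightarrow> (\<lambda>y. wedge_vecs (\<lambda>i. v i y) xs) differentiable (at x)"
  by (induction xs) (simp_all add: differentiable_wedge differentiable_vec_mv)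

lemma lie_deriv_wedge_vecs:
  assumes "a differentiable (at x)" "\<forall>i\<in>set xs. v i differentiable (at x)"
  shows "lie_deriv a (\<lambda>y. wedge_vecs (\<lambda>i. v i y) xs) x
       = wedge_replace_sum (\<lambda>i. - lie_bracket a (v i) x) (\<lambda>i. v i x) xs"
  using assms(2)
  by (induction xs)
     (simp_all add: lie_deriv_mv_one lie_deriv_wedge_vec_mv assms(1) differentiable_wedge_vecs)

definition div_wedge_fields ::
  "(nat \<Rightarrow> real ^ 'n::{finite,linorder} \<Rightarrow> real ^ 'n::{finite,linorder})
    \<Rightarrow> nat list \<Rightarrow> real ^ 'n::{finite,linorder} \<Rightarrow> 'n mvec"
where
  "div_wedge_fields v xs x = mv_div (\<lambda>y. wedge_vecs (\<lambda>i. v i y) xs) x"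

lemma div_wedge_fields_Nil: "div_wedge_fields v [] x = 0"
  by (simp add: div_wedge_fields_def mv_div_fderiv)

lemma div_wedge_fields_Cons:
  assumes "\<forall>j\<in>set (i # xs). v j differentiable (at x)"
  shows "div_wedge_fields v (i # xs) x = vf_div (v i) x *\<^sub>R wedge_vecs (\<lambda>i. v i x) xs
     + wedge_replace_sum (\<lambda>j. - lie_bracket (v i) (v j) x) (\<lambda>i. v i x) xs
     - wedge (vec_mv (v i x)) (div_wedge_fields v xs x)"
  using assms
  by (simp add: div_wedge_fields_def mv_div_wedge_vec_mv differentiable_wedge_vecs lie_deriv_wedge_vecs)

lemma homogeneous_div_wedge_fields:
  assumes "\<forall>i\<in>set xs. v i differentiable (at x)"
  shows "homogeneous (length xs - 1) (div_wedge_fields v xs x)"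
  using assms
proof (induction xs)
  case Nil
  then show ?case by (simp add: div_wedge_fields_Nil homogeneous_zero)
next
  case (Cons i xs)
  have "homogeneous (length xs) (wedge (vec_mv (v i x)) (div_wedge_fields v xs x))"
    using Cons homogeneous_wedge_vec_mv[of "length xs - 1"]
    by (cases xs) (auto simp: div_wedge_fields_Nil homogeneous_zero)
  then show ?case
    using Cons.prems
    by (simp add: div_wedge_fields_Cons homogeneous_diff homogeneous_add homogeneous_scale
        homogeneous_wedge_vecs homogeneous_wedge_replace_sum)
qed

lemma div_wedge_fields_in_Lambda:
  assumes "\<forall>i\<in>set xs. v i differentiable (at x)" "subspace Z"
    "\<forall>i\<in>set xs. v i x \<in> Z" "\<forall>i\<in>set xs. \<forall>j\<in>set xs. lie_bracket (v i) (v j) x \<in> Z"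
  shows "div_wedge_fields v xs x \<in> Lambda (length xs - 1) Z"
  using assms(1,3,4)
proof (induction xs)
  case Nil
  then show ?case by (simp add: div_wedge_fields_Nil subspace_0[OF Lambda_subspace])
next
  case (Cons i xs)
  note Lambda = Lambda_subspace[of "length xs" Z]
  have "wedge_vecs (\<lambda>i. v i x) xs \<in> Lambda (length xs) Z"
    using Cons.prems by (intro wedge_vecs_in_Lambda) auto
  moreover have "wedge_replace_sum (\<lambda>j. - lie_bracket (v i) (v j) x) (\<lambda>i. v i x) xs \<in> Lambda (length xs) Z"
    using Cons.prems subspace_neg[OF assms(2)] by (intro wedge_replace_sum_in_Lambda) auto
  moreover have "wedge (vec_mv (v i x)) (div_wedge_fields v xs x) \<in> Lambda (length xs) Z"
    using Cons wedge_vec_mv_in_Lambda[of "v i x" Z _ "length xs - 1"]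
    by (cases xs) (auto simp: div_wedge_fields_Nil subspace_0[OF Lambda])
  ultimately show ?case
    using Cons.prems
    by (simp add: div_wedge_fields_Cons subspace_add[OF Lambda] subspace_diff[OF Lambda]
        subspace_scale[OF Lambda])
qed

lemma interior_div_wedge_fields_Cons:
  assumes "\<forall>j\<in>set (i # xs). v j differentiable (at x)" "\<forall>j\<in>set (i # xs). v j x \<bullet> \<gamma> = 0"
  shows "mv_interior (div_wedge_fields v (i # xs) x) (vec_mv \<gamma>) =
     wedge_omit_sum (\<lambda>j. - lie_bracket (v i) (v j) x \<bullet> \<gamma>) (\<lambda>i. v i x) xs
     + wedge (vec_mv (v i x)) (mv_interior (div_wedge_fields v xs x) (vec_mv \<gamma>))"
proof -
  have "\<forall>j\<in>set xs. v j x \<bullet> \<gamma> = 0" using assms(2) by auto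
  then show ?thesis
    using assms
    by (simp add: div_wedge_fields_Cons interior_add interior_diff interior_scale
        interior_wedge_vecs_eq_0 interior_wedge_replace_sum interior_wedge_vec_mv)
qed

lemma interior_interior_div_wedge_fields:
  assumes "\<forall>i\<in>set xs. v i differentiable (at x)" "\<forall>j\<in>set xs. v j x \<bullet> \<gamma> = 0"
    "\<forall>j\<in>set xs. v j x \<bullet> \<theta> = 0"
  shows "mv_interior (mv_interior (div_wedge_fields v xs x) (vec_mv \<gamma>)) (vec_mv \<theta>) = 0"
  using assms
proof (induction xs)
  case Nil
  then show ?case by (simp add: div_wedge_fields_Nil)
next
  case (Cons i xs)
  have "\<theta> \<in> ((\<lambda>i. v i x) ` set xs)\<^sup>\<bottom>" using Cons.prems(3) by (auto simp: mem_orthogonal_comp_iff)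
  then have "mv_interior (wedge_omit_sum (\<lambda>j. - lie_bracket (v i) (v j) x \<bullet> \<gamma>) (\<lambda>i. v i x) xs)
      (vec_mv \<theta>) = 0"
    using interior_eq_0_if_in_Lambda wedge_omit_sum_in_Lambda by blast
  then show ?case
    using Cons by (simp add: interior_div_wedge_fields_Cons interior_add interior_wedge_vec_mv)
qed

text \<open>Contracting once more with a covector dual to \<open>v\<^sub>1\<close> shows that the contraction for the
  tail \<open>v\<^sub>2, \<dots>, v\<^sub>l\<close> vanishes; the remaining \<open>wedge_omit_sum\<close> then forces
  \<open>\<gamma> \<bullet> [v\<^sub>1, v\<^sub>j] = 0\<close>.\<close>

lemma interior_div_wedge_fields_eq_0D:
  assumes "\<forall>i\<in>set xs. v i differentiable (at x)" "\<forall>j\<in>set xs. v j x \<bullet> \<gamma> = 0"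
    "distinct xs" "has_dual_family (\<lambda>i. v i x) (set xs)"
    "mv_interior (div_wedge_fields v xs x) (vec_mv \<gamma>) = 0"
  shows "\<forall>p\<in>set xs. \<forall>q\<in>set xs. lie_bracket (v p) (v q) x \<bullet> \<gamma> = 0"
  using assms
proof (induction xs)
  case (Cons i xs)
  obtain \<theta> where \<theta>: "v i x \<bullet> \<theta> = 1" "\<forall>q\<in>set (i # xs) - {i}. v q x \<bullet> \<theta> = 0"
    by (rule has_dual_family_obtain[OF Cons.prems(4)]) auto
  then have xs\<theta>: "\<forall>j\<in>set xs. v j x \<bullet> \<theta> = 0" using Cons.prems(3) by auto
  let ?W = "mv_interior (div_wedge_fields v xs x) (vec_mv \<gamma>)"
  let ?O = "wedge_omit_sum (\<lambda>j. - lie_bracket (v i) (v j) x \<bullet> \<gamma>) (\<lambda>i. v i x) xs"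
  have sum0: "?O + wedge (vec_mv (v i x)) ?W = 0"
    using interior_div_wedge_fields_Cons[OF Cons.prems(1,2)] Cons.prems(5) by simp
  have "\<theta> \<in> ((\<lambda>i. v i x) ` set xs)\<^sup>\<bottom>" using xs\<theta> by (auto simp: mem_orthogonal_comp_iff)
  then have "mv_interior ?O (vec_mv \<theta>) = 0"
    using interior_eq_0_if_in_Lambda wedge_omit_sum_in_Lambda by blast
  moreover have "mv_interior ?W (vec_mv \<theta>) = 0"
    using interior_interior_div_wedge_fields Cons.prems xs\<theta> by auto
  ultimately have "mv_interior (?O + wedge (vec_mv (v i x)) ?W) (vec_mv \<theta>) = ?W"
    using \<theta>(1) by (simp add: interior_add interior_wedge_vec_mv)
  then have W0: "?W = 0" and "?O = 0" using sum0 by simp_all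
  have dual_xs: "has_dual_family (\<lambda>i. v i x) (set xs)"
    using Cons.prems(4) has_dual_family_subset by (metis set_subset_Cons)
  then have "\<forall>j\<in>set xs. lie_bracket (v i) (v j) x \<bullet> \<gamma> = 0"
    using wedge_omit_sum_eq_0D[OF _ _ \<open>?O = 0\<close>] Cons.prems(3) by auto
  moreover have "\<forall>p\<in>set xs. \<forall>q\<in>set xs. lie_bracket (v p) (v q) x \<bullet> \<gamma> = 0"
    using Cons.IH Cons.prems dual_xs W0 by auto
  ultimately show ?case
    by (auto simp: lie_bracket_def inner_diff_left)
qed simp

lemma mv_div_wedge_pair:
  fixes i j :: nat
  assumes "v i differentiable (at x)" "v j differentiable (at x)"
  shows "mv_div (\<lambda>y. wedge (vec_mv (v i y)) (vec_mv (v j y))) x =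
     vec_mv (vf_div (v i) x *\<^sub>R v j x - vf_div (v j) x *\<^sub>R v i x - lie_bracket (v i) (v j) x)"
proof -
  have "div_wedge_fields v [j] x = vf_div (v j) x *\<^sub>R mv_one"
    using assms by (simp add: div_wedge_fields_Cons div_wedge_fields_Nil)
  then have "div_wedge_fields v [i, j] x
      = vf_div (v i) x *\<^sub>R vec_mv (v j x) + vec_mv (- lie_bracket (v i) (v j) x)
        - vf_div (v j) x *\<^sub>R vec_mv (v i x)"
    using assms by (simp add: div_wedge_fields_Cons wedge_vec_mv_one wedge_scale_right)
  also have "\<dots> = vec_mv (vf_div (v i) x *\<^sub>R v j x - vf_div (v j) x *\<^sub>R v i x - lie_bracket (v i) (v j) x)"
    by (simp add: linear_diff[OF linear_vec_mv] linear_scale[OF linear_vec_mv]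
        linear_neg[OF linear_vec_mv])
  finally show ?thesis by (simp add: div_wedge_fields_def wedge_vec_mv_one)
qed

section \<open>Coefficients with respect to a frame\<close>

lemma sum_abs_le_near_identity:
  fixes M :: "nat \<Rightarrow> nat \<Rightarrow> real"
  assumes fin: "finite S" and M: "\<forall>l\<in>S. \<forall>i\<in>S. \<bar>M l i - (if l = i then 1 else 0)\<bar> \<le> \<epsilon>"
    and eps: "\<epsilon> * card S \<le> 1/2"
  shows "(\<Sum>i\<in>S. \<bar>c i\<bar>) \<le> 2 * (\<Sum>l\<in>S. \<bar>\<Sum>i\<in>S. c i * M l i\<bar>)"
proof -
  have per: "\<bar>c l\<bar> \<le> \<bar>\<Sum>i\<in>S. c i * M l i\<bar> + \<epsilon> * (\<Sum>i\<in>S. \<bar>c i\<bar>)" if l: "l \<in> S" for l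
  proof -
    have "(\<Sum>i\<in>S. c i * (if l = i then 1 else 0)) = c l" using l fin by (simp add: if_distrib cong: if_cong)
    then have "(\<Sum>i\<in>S. c i * M l i) = c l + (\<Sum>i\<in>S. c i * (M l i - (if l = i then 1 else 0)))"
      by (simp add: algebra_simps sum.distrib sum_subtractf)
    moreover have "\<bar>\<Sum>i\<in>S. c i * (M l i - (if l = i then 1 else 0))\<bar> \<le> (\<Sum>i\<in>S. \<bar>c i\<bar> * \<epsilon>)"
    proof -
      have "\<bar>\<Sum>i\<in>S. c i * (M l i - (if l = i then 1 else 0))\<bar> \<le> (\<Sum>i\<in>S. \<bar>c i * (M l i - (if l = i then 1 else 0))\<bar>)"
        by (rule sum_abs)
      also have "\<dots> \<le> (\<Sum>i\<in>S. \<bar>c i\<bar> * \<epsilon>)"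
      proof (rule sum_mono)
        fix i assume "i \<in> S"
        then have "\<bar>M l i - (if l = i then 1 else 0)\<bar> \<le> \<epsilon>" using M l by blast
        then show "\<bar>c i * (M l i - (if l = i then 1 else 0))\<bar> \<le> \<bar>c i\<bar> * \<epsilon>"
          by (simp add: abs_mult mult_left_mono)
      qed
      finally show ?thesis .
    qed
    moreover have "(\<Sum>i\<in>S. \<bar>c i\<bar> * \<epsilon>) = \<epsilon> * (\<Sum>i\<in>S. \<bar>c i\<bar>)" by (simp add: sum_distrib_left mult.commute)
    ultimately show ?thesis
      using abs_triangle_ineq4[of "\<Sum>i\<in>S. c i * M l i" "\<Sum>i\<in>S. c i * (M l i - (if l = i then 1 else 0))"]
      by simp
  qed
  have "(\<Sum>l\<in>S. \<bar>c l\<bar>) \<le> (\<Sum>l\<in>S. \<bar>\<Sum>i\<in>S. c i * M l i\<bar> + \<epsilon> * (\<Sum>i\<in>S. \<bar>c i\<bar>))"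
    by (rule sum_mono) (rule per)
  also have "\<dots> = (\<Sum>l\<in>S. \<bar>\<Sum>i\<in>S. c i * M l i\<bar>) + (\<epsilon> * card S) * (\<Sum>i\<in>S. \<bar>c i\<bar>)"
    by (simp add: sum.distrib)
  also have "(\<epsilon> * card S) * (\<Sum>i\<in>S. \<bar>c i\<bar>) \<le> 1/2 * (\<Sum>i\<in>S. \<bar>c i\<bar>)"
    by (rule mult_right_mono[OF eps]) (simp add: sum_nonneg)
  finally show ?thesis by simp
qed

lemma eventually_dual_pairing_near_identity:
  assumes "finite S" "\<forall>i\<in>S. isCont (v i) x" "\<epsilon> > 0"
    and \<beta>: "\<forall>l\<in>S. v l x \<bullet> \<beta> l = 1 \<and> (\<forall>q\<in>S - {l}. v q x \<bullet> \<beta> l = 0)"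
  shows "eventually (\<lambda>y. \<forall>l\<in>S. \<forall>i\<in>S. \<bar>\<beta> l \<bullet> v i y - (if l = i then 1 else 0)\<bar> \<le> \<epsilon>) (at x)"
proof (intro eventually_ball_finite ballI assms(1))
  fix l i assume l: "l \<in> S" and i: "i \<in> S"
  have "((\<lambda>y. \<beta> l \<bullet> v i y) \<longlongrightarrow> \<beta> l \<bullet> v i x) (at x)"
    using assms(2) i unfolding isCont_def by (intro tendsto_intros) auto
  moreover have "\<beta> l \<bullet> v i x = (if l = i then 1 else 0)" using \<beta> l i by (auto simp: inner_commute)
  ultimately have "((\<lambda>y. \<beta> l \<bullet> v i y) \<longlongrightarrow> (if l = i then 1 else 0)) (at x)" by simp
  then have "eventually (\<lambda>y. dist (\<beta> l \<bullet> v i y) (if l = i then 1 else 0) < \<epsilon>) (at x)"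
    using assms(3) tendstoD by blast
  then show "eventually (\<lambda>y. \<bar>\<beta> l \<bullet> v i y - (if l = i then 1 else 0)\<bar> \<le> \<epsilon>) (at x)"
    by eventually_elim (simp add: dist_real_def)
qed

text \<open>The coefficients \<open>f y i - f x i\<close> of \<open>w y - \<Sum>\<^sub>i f x i v\<^sub>i y \<rightarrow> 0\<close> are controlled through
  the matrix \<open>(\<beta>\<^sub>l \<bullet> v\<^sub>i y)\<close>, which is close to the identity near \<open>x\<close>.\<close>

lemma frame_coefficients_tendsto:
  fixes v :: "nat \<Rightarrow> real ^ 'n::{finite,linorder} \<Rightarrow> real ^ 'n::{finite,linorder}"
    and w :: "real ^ 'n::{finite,linorder} \<Rightarrow> real ^ 'n::{finite,linorder}"
    and f :: "real ^ 'n::{finite,linorder} \<Rightarrow> nat \<Rightarrow> real"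
  assumes "open \<Omega>" "x \<in> \<Omega>" "finite S" "\<forall>i\<in>S. isCont (v i) x" "has_dual_family (\<lambda>i. v i x) S"
    "isCont w x" and rep: "\<forall>y\<in>\<Omega>. w y = (\<Sum>i\<in>S. f y i *\<^sub>R v i y)"
  shows "\<forall>i\<in>S. ((\<lambda>y. f y i) \<longlongrightarrow> f x i) (at x)"
proof -
  obtain \<beta> where \<beta>: "\<forall>l\<in>S. v l x \<bullet> \<beta> l = 1 \<and> (\<forall>q\<in>S - {l}. v q x \<bullet> \<beta> l = 0)"
    using assms(5) unfolding has_dual_family_def by metis
  define \<epsilon> :: real where "\<epsilon> = 1 / (2 * (card S + 1))"
  have "\<epsilon> > 0" unfolding \<epsilon>_def by simp
  have \<epsilon>_card: "\<epsilon> * card S \<le> 1/2" unfolding \<epsilon>_def by (simp add: field_simps)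
  define r where "r y = w y - (\<Sum>i\<in>S. f x i *\<^sub>R v i y)" for y
  have "(r \<longlongrightarrow> r x) (at x)"
    unfolding r_def using assms(4,6) unfolding isCont_def by (intro tendsto_intros) auto
  moreover have "r x = 0" using rep assms(2) unfolding r_def by simp
  ultimately have "((\<lambda>y. 2 * (\<Sum>l\<in>S. \<bar>\<beta> l \<bullet> r y\<bar>)) \<longlongrightarrow> 2 * (\<Sum>l\<in>S. \<bar>\<beta> l \<bullet> 0\<bar>)) (at x)"
    by (intro tendsto_intros) simp
  then have bound_tendsto: "((\<lambda>y. 2 * (\<Sum>l\<in>S. \<bar>\<beta> l \<bullet> r y\<bar>)) \<longlongrightarrow> 0) (at x)" by simp
  have bound: "eventually (\<lambda>y. (\<Sum>i\<in>S. \<bar>f y i - f x i\<bar>) \<le> 2 * (\<Sum>l\<in>S. \<bar>\<beta> l \<bullet> r y\<bar>)) (at x)"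
    using eventually_dual_pairing_near_identity[OF assms(3,4) \<open>\<epsilon> > 0\<close> \<beta>]
      eventually_at_in_open'[OF assms(1,2)]
  proof eventually_elim
    case (elim y)
    have "r y = (\<Sum>i\<in>S. (f y i - f x i) *\<^sub>R v i y)"
      unfolding r_def using rep elim(2) by (simp add: scaleR_diff_left sum_subtractf)
    then have "\<beta> l \<bullet> r y = (\<Sum>i\<in>S. (f y i - f x i) * (\<beta> l \<bullet> v i y))" for l
      by (simp add: inner_sum_right)
    then show ?case
      using sum_abs_le_near_identity[OF assms(3) _ \<epsilon>_card, of "\<lambda>l i. \<beta> l \<bullet> v i y" "\<lambda>i. f y i - f x i"]
        elim(1)
      by simp
  qed
  have "((\<lambda>y. f y i - f x i) \<longlongrightarrow> 0) (at x)" if "i \<in> S" for i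
  proof (rule Lim_null_comparison[OF _ bound_tendsto])
    show "eventually (\<lambda>y. norm (f y i - f x i) \<le> 2 * (\<Sum>l\<in>S. \<bar>\<beta> l \<bullet> r y\<bar>)) (at x)"
      using bound
    proof eventually_elim
      case (elim y)
      have "\<bar>f y i - f x i\<bar> \<le> (\<Sum>i\<in>S. \<bar>f y i - f x i\<bar>)"
        by (rule member_le_sum[OF that]) (simp_all add: assms(3))
      then show ?case using elim by simp
    qed
  qed
  then show ?thesis by (simp add: LIM_zero_iff)
qed

lemma has_derivative_mult_vanishing:
  fixes \<alpha> \<psi> :: "'a::real_normed_vector \<Rightarrow> real"
  assumes a: "(\<alpha> \<longlongrightarrow> 0) (at x)" and d: "(\<psi> has_derivative D) (at x)" and z: "\<psi> x = 0"
  shows "((\<lambda>y. \<alpha> y * \<psi> y) has_derivative (\<lambda>h. 0)) (at x)"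
proof -
  have bl: "bounded_linear D" using d by (rule has_derivative_bounded_linear)
  obtain K where K: "K > 0" "\<And>h. norm (D h) \<le> norm h * K"
    using bounded_linear.pos_bounded[OF bl] by blast
  have rest: "((\<lambda>y. norm ((\<psi> y - \<psi> x) - D (y - x)) / norm (y - x)) \<longlongrightarrow> 0) (at x)"
    using d unfolding has_derivative_iff_norm by blast
  define g where "g y = \<bar>\<alpha> y\<bar> * (norm ((\<psi> y - \<psi> x) - D (y - x)) / norm (y - x) + K)" for y
  have gt: "(g \<longlongrightarrow> 0) (at x)"
  proof -
    have "(g \<longlongrightarrow> \<bar>0\<bar> * (0 + K)) (at x)" unfolding g_def
      using a rest by (intro tendsto_intros)
    then show ?thesis by simp
  qed
  have ev: "eventually (\<lambda>y. norm (norm ((\<alpha> y * \<psi> y - \<alpha> x * \<psi> x) - 0) / norm (y - x)) \<le> g y) (at x)"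
  proof (rule eventually_mono[OF eventually_True])
    fix y
    have n: "norm (\<psi> y) \<le> norm ((\<psi> y - \<psi> x) - D (y - x)) + norm (y - x) * K"
      using norm_triangle_ineq[of "(\<psi> y - \<psi> x) - D (y - x)" "D (y - x)"] K(2)[of "y - x"] z by simp
    show "norm (norm ((\<alpha> y * \<psi> y - \<alpha> x * \<psi> x) - 0) / norm (y - x)) \<le> g y"
    proof (cases "y = x")
      case True then show ?thesis unfolding g_def using K by simp
    next
      case False
      then have np: "norm (y - x) > 0" by simp
      have "norm (norm ((\<alpha> y * \<psi> y - \<alpha> x * \<psi> x) - 0) / norm (y - x)) = \<bar>\<alpha> y\<bar> * (norm (\<psi> y) / norm (y - x))"
        using z by (simp add: abs_mult)
      also have "\<dots> \<le> \<bar>\<alpha> y\<bar> * ((norm ((\<psi> y - \<psi> x) - D (y - x)) + norm (y - x) * K) / norm (y - x))"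
        by (intro mult_left_mono divide_right_mono n) simp_all
      also have "\<dots> = g y" unfolding g_def using np by (simp add: add_divide_distrib)
      finally show ?thesis .
    qed
  qed
  have "((\<lambda>y. norm ((\<alpha> y * \<psi> y - \<alpha> x * \<psi> x) - 0) / norm (y - x)) \<longlongrightarrow> 0) (at x)"
    by (rule Lim_null_comparison[OF ev gt])
  then show ?thesis unfolding has_derivative_iff_norm by simp
qed

lemma inner_frechet_derivative_frame_expansion:
  fixes v :: "nat \<Rightarrow> real ^ 'n::{finite,linorder} \<Rightarrow> real ^ 'n::{finite,linorder}"
    and w :: "real ^ 'n::{finite,linorder} \<Rightarrow> real ^ 'n::{finite,linorder}"
    and f :: "real ^ 'n::{finite,linorder} \<Rightarrow> nat \<Rightarrow> real"
  assumes op: "open \<Omega>" and x: "x \<in> \<Omega>" and fin: "finite S"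
    and dv: "\<forall>i\<in>S. (v i has_derivative Dv i) (at x)" and dw: "(w has_derivative Dw) (at x)"
    and rep: "\<forall>y\<in>\<Omega>. w y = (\<Sum>i\<in>S. f y i *\<^sub>R v i y)"
    and ct: "\<forall>i\<in>S. ((\<lambda>y. f y i) \<longlongrightarrow> f x i) (at x)"
    and orth: "\<forall>i\<in>S. v i x \<bullet> \<gamma> = 0"
  shows "\<gamma> \<bullet> Dw h = (\<Sum>i\<in>S. f x i * (\<gamma> \<bullet> Dv i h))"
proof -
  define \<phi> where "\<phi> y = \<gamma> \<bullet> w y - (\<Sum>i\<in>S. f x i * (\<gamma> \<bullet> v i y))" for y
  have d1: "(\<phi> has_derivative (\<lambda>h. \<gamma> \<bullet> Dw h - (\<Sum>i\<in>S. f x i * (\<gamma> \<bullet> Dv i h)))) (at x)"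
    unfolding \<phi>_def using dv dw by (auto intro!: derivative_eq_intros)
  have d2: "((\<lambda>y. \<Sum>i\<in>S. (f y i - f x i) * (\<gamma> \<bullet> (v i y - v i x)))
      has_derivative (\<lambda>h. \<Sum>i\<in>S. 0)) (at x)"
  proof (intro has_derivative_sum ballI)
    fix i assume i: "i \<in> S"
    have vanishing: "((\<lambda>y. f y i - f x i) \<longlongrightarrow> 0) (at x)" using ct i by (simp add: LIM_zero_iff)
    have "((\<lambda>y. \<gamma> \<bullet> (v i y - v i x)) has_derivative (\<lambda>h. \<gamma> \<bullet> Dv i h)) (at x)"
      by (rule bounded_linear.has_derivative[OF bounded_linear_inner_right])
         (use dv i in \<open>auto intro!: derivative_eq_intros\<close>)
    then show "((\<lambda>y. (f y i - f x i) * (\<gamma> \<bullet> (v i y - v i x))) has_derivative (\<lambda>h. 0)) (at x)"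
      by (rule has_derivative_mult_vanishing[OF vanishing]) simp
  qed
  have eq: "(\<Sum>i\<in>S. (f y i - f x i) * (\<gamma> \<bullet> (v i y - v i x))) = \<phi> y" if y: "y \<in> \<Omega>" for y
  proof -
    have "(\<Sum>i\<in>S. (f y i - f x i) * (\<gamma> \<bullet> (v i y - v i x))) = (\<Sum>i\<in>S. f y i * (\<gamma> \<bullet> v i y) - f x i * (\<gamma> \<bullet> v i y))"
      using orth by (intro sum.cong refl) (simp add: inner_commute algebra_simps)
    also have "\<dots> = \<gamma> \<bullet> w y - (\<Sum>i\<in>S. f x i * (\<gamma> \<bullet> v i y))"
      using rep y by (simp add: sum_subtractf inner_sum_right)
    finally show ?thesis unfolding \<phi>_def .
  qed
  have d3: "(\<phi> has_derivative (\<lambda>h. \<Sum>i\<in>S. 0)) (at x)"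
    by (rule has_derivative_transform_within_open[OF d2 op x]) (use eq in auto)
  have "(\<lambda>h. \<gamma> \<bullet> Dw h - (\<Sum>i\<in>S. f x i * (\<gamma> \<bullet> Dv i h))) = (\<lambda>h. \<Sum>i\<in>S. 0)"
    by (rule has_derivative_unique[OF d1 d3])
  then have "\<gamma> \<bullet> Dw h - (\<Sum>i\<in>S. f x i * (\<gamma> \<bullet> Dv i h)) = 0" by (metis sum.neutral_const)
  then show ?thesis by simp
qed

section \<open>Distributions spanned by a frame\<close>

lemma mem_subspace_iff_orthogonal_comp:
  fixes Z :: "'a::euclidean_space set"
  assumes "subspace Z"
  shows "b \<in> Z \<longleftrightarrow> (\<forall>\<gamma>\<in>Z\<^sup>\<bottom>. \<gamma> \<bullet> b = 0)"
  by (subst orthogonal_comp_self[OF assms, symmetric]) (simp add: orthogonal_comp_def orthogonal_def)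

lemma C1_on_has_derivative: "C1_on \<Omega> w \<Longrightarrow> y \<in> \<Omega> \<Longrightarrow> (w has_derivative fderiv w y) (at y)"
  unfolding C1_on_def using frechet_derivative_at by metis

locale frame_distribution =
  fixes \<Omega> :: "(real ^ 'n::{finite,linorder}) set"
    and v :: "nat \<Rightarrow> real ^ 'n::{finite,linorder} \<Rightarrow> real ^ 'n::{finite,linorder}"
    and V :: "real ^ 'n::{finite,linorder} \<Rightarrow> (real ^ 'n::{finite,linorder}) set"
    and k :: nat
  assumes open_domain: "open \<Omega>"
    and C1_frame: "\<forall>i\<in>{1..k}. C1_on \<Omega> (v i)"
    and frame_independent:
      "\<forall>y\<in>\<Omega>. \<forall>c::nat \<Rightarrow> real. (\<Sum>i=1..k. c i *\<^sub>R v i y) = 0 \<longrightarrow> (\<forall>i\<in>{1..k}. c i = 0)"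
    and distribution_span: "\<forall>y\<in>\<Omega>. V y = span ((\<lambda>i. v i y) ` {1..k})"
begin

lemma frame_has_derivative: "x \<in> \<Omega> \<Longrightarrow> i \<in> {1..k} \<Longrightarrow> (v i has_derivative fderiv (v i) x) (at x)"
  using C1_frame C1_on_has_derivative by blast

lemma frame_differentiable: "x \<in> \<Omega> \<Longrightarrow> i \<in> {1..k} \<Longrightarrow> v i differentiable (at x)"
  using frame_has_derivative unfolding differentiable_def by blast

lemma frame_has_dual_family: "x \<in> \<Omega> \<Longrightarrow> has_dual_family (\<lambda>i. v i x) {1..k}"
  using frame_independent by (intro has_dual_family_if_independent) auto

lemma subspace_distribution: "x \<in> \<Omega> \<Longrightarrow> subspace (V x)"
  using distribution_span by simp

lemma frame_in_distribution: "x \<in> \<Omega> \<Longrightarrow> i \<in> {1..k} \<Longrightarrow> v i x \<in> V x"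
  using distribution_span by (simp add: span_base)

lemma frame_orthogonal: "x \<in> \<Omega> \<Longrightarrow> \<gamma> \<in> (V x)\<^sup>\<bottom> \<Longrightarrow> i \<in> {1..k} \<Longrightarrow> v i x \<bullet> \<gamma> = 0"
  using frame_in_distribution by (simp add: mem_orthogonal_comp_iff)

lemma section_coefficients:
  assumes "\<forall>y\<in>\<Omega>. w y \<in> V y"
  obtains f where "\<forall>y\<in>\<Omega>. w y = (\<Sum>i\<in>{1..k}. f y i *\<^sub>R v i y)"
proof -
  have "\<forall>y\<in>\<Omega>. \<exists>c. w y = (\<Sum>i\<in>{1..k}. c i *\<^sub>R v i y)"
  proof
    fix y assume "y \<in> \<Omega>"
    then have "w y \<in> span ((\<lambda>i. v i y) ` {1..k})" using assms distribution_span by simp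
    then show "\<exists>c. w y = (\<Sum>i\<in>{1..k}. c i *\<^sub>R v i y)"
      by (elim in_span_image_sum) auto
  qed
  then show ?thesis using that by metis
qed

lemma inner_fderiv_section:
  assumes "x \<in> \<Omega>" "C1_on \<Omega> w" and f: "\<forall>y\<in>\<Omega>. w y = (\<Sum>i\<in>{1..k}. f y i *\<^sub>R v i y)"
    and "\<gamma> \<in> (V x)\<^sup>\<bottom>"
  shows "\<gamma> \<bullet> fderiv w x h = (\<Sum>i\<in>{1..k}. f x i * (\<gamma> \<bullet> fderiv (v i) x h))"
proof -
  have dv: "\<forall>i\<in>{1..k}. (v i has_derivative fderiv (v i) x) (at x)"
    using frame_has_derivative assms(1) by blast
  have dw: "(w has_derivative fderiv w x) (at x)" using C1_on_has_derivative assms(1,2) by blast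
  have "\<forall>i\<in>{1..k}. isCont (v i) x" "isCont w x"
    using dv dw has_derivative_continuous by blast+
  then have "\<forall>i\<in>{1..k}. ((\<lambda>y. f y i) \<longlongrightarrow> f x i) (at x)"
    by (intro frame_coefficients_tendsto[OF open_domain assms(1) _ _ frame_has_dual_family[OF assms(1)] _ f])
       auto
  then show ?thesis
    using frame_orthogonal[OF assms(1,4)]
    by (intro inner_frechet_derivative_frame_expansion[OF open_domain assms(1) _ dv dw f]) auto
qed

lemma inner_lie_bracket_sections:
  assumes x: "x \<in> \<Omega>" and "C1_on \<Omega> w" "C1_on \<Omega> w'"
    and f: "\<forall>y\<in>\<Omega>. w y = (\<Sum>i\<in>{1..k}. f y i *\<^sub>R v i y)"
    and f': "\<forall>y\<in>\<Omega>. w' y = (\<Sum>i\<in>{1..k}. f' y i *\<^sub>R v i y)"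
    and \<gamma>: "\<gamma> \<in> (V x)\<^sup>\<bottom>"
  shows "\<gamma> \<bullet> lie_bracket w w' x
       = (\<Sum>i\<in>{1..k}. \<Sum>l\<in>{1..k}. f x i * f' x l * (\<gamma> \<bullet> lie_bracket (v i) (v l) x))"
proof -
  let ?S = "{1..k}" and ?D = "\<lambda>i. fderiv (v i) x"
  have lin: "\<gamma> \<bullet> ?D i (\<Sum>l\<in>?S. c l *\<^sub>R v l x) = (\<Sum>l\<in>?S. c l * (\<gamma> \<bullet> ?D i (v l x)))"
    if "i \<in> ?S" for i c
    using linear_frechet_derivative[OF frame_differentiable[OF x that]]
    by (simp add: linear_sum linear_scale inner_sum_right)
  have "\<gamma> \<bullet> lie_bracket w w' x = \<gamma> \<bullet> fderiv w x (w' x) - \<gamma> \<bullet> fderiv w' x (w x)"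
    by (simp add: lie_bracket_def inner_diff_right)
  also have "\<dots> = (\<Sum>i\<in>?S. \<Sum>l\<in>?S. f x i * f' x l * (\<gamma> \<bullet> ?D i (v l x)))
      - (\<Sum>l\<in>?S. \<Sum>i\<in>?S. f' x l * f x i * (\<gamma> \<bullet> ?D l (v i x)))"
    using inner_fderiv_section[OF x assms(2) f \<gamma>] inner_fderiv_section[OF x assms(3) f' \<gamma>] f f' x lin
    by (simp add: sum_distrib_left mult.assoc)
  also have "(\<Sum>l\<in>?S. \<Sum>i\<in>?S. f' x l * f x i * (\<gamma> \<bullet> ?D l (v i x)))
      = (\<Sum>i\<in>?S. \<Sum>l\<in>?S. f' x l * f x i * (\<gamma> \<bullet> ?D l (v i x)))"
    by (rule sum.swap)
  finally show ?thesis
    by (simp add: lie_bracket_def sum_subtractf[symmetric] algebra_simps)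
qed

abbreviation brackets_in_distribution :: "real ^ 'n::{finite,linorder} \<Rightarrow> bool" where
  "brackets_in_distribution x \<equiv> \<forall>i\<in>{1..k}. \<forall>j\<in>{1..k}. lie_bracket (v i) (v j) x \<in> V x"

abbreviation frame_wedge :: "real ^ 'n::{finite,linorder} \<Rightarrow> 'n mvec" where
  "frame_wedge x \<equiv> wedge_vecs (\<lambda>i. v i x) [1..<k+1]"

abbreviation div_frame_wedge :: "real ^ 'n::{finite,linorder} \<Rightarrow> 'n mvec" where
  "div_frame_wedge x \<equiv> div_wedge_fields v [1..<k+1] x"

lemma involutive_at_iff_brackets:
  assumes x: "x \<in> \<Omega>"
  shows "involutive_at \<Omega> V x \<longleftrightarrow> brackets_in_distribution x"
proof
  assume "involutive_at \<Omega> V x"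
  moreover have "\<forall>y\<in>\<Omega>. v i y \<in> V y" if "i \<in> {1..k}" for i
    using frame_in_distribution that by blast
  ultimately show "brackets_in_distribution x"
    using C1_frame unfolding involutive_at_def by blast
next
  assume br: "brackets_in_distribution x"
  show "involutive_at \<Omega> V x"
    unfolding involutive_at_def
  proof (intro allI impI)
    fix w w' assume H: "C1_on \<Omega> w \<and> C1_on \<Omega> w' \<and> (\<forall>y\<in>\<Omega>. w y \<in> V y \<and> w' y \<in> V y)"
    obtain f where f: "\<forall>y\<in>\<Omega>. w y = (\<Sum>i\<in>{1..k}. f y i *\<^sub>R v i y)"
      using H section_coefficients by blast
    obtain f' where f': "\<forall>y\<in>\<Omega>. w' y = (\<Sum>i\<in>{1..k}. f' y i *\<^sub>R v i y)"
      using H section_coefficients by blast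
    have "\<gamma> \<bullet> lie_bracket (v i) (v l) x = 0" if "\<gamma> \<in> (V x)\<^sup>\<bottom>" "i \<in> {1..k}" "l \<in> {1..k}" for \<gamma> i l
      using br that by (auto simp: mem_orthogonal_comp_iff inner_commute)
    then show "lie_bracket w w' x \<in> V x"
      using inner_lie_bracket_sections[OF x _ _ f f'] H
      by (simp add: mem_subspace_iff_orthogonal_comp[OF subspace_distribution[OF x]])
  qed
qed

lemma brackets_iff_div_pairs:
  assumes x: "x \<in> \<Omega>"
  shows "brackets_in_distribution x \<longleftrightarrow> (\<forall>i\<in>{1..k}. \<forall>j\<in>{1..k}. \<exists>w\<in>V x.
           mv_div (\<lambda>y. wedge (vec_mv (v i y)) (vec_mv (v j y))) x = vec_mv w)"
proof -
  have "lie_bracket (v i) (v j) x \<in> V x \<longleftrightarrow>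
      (\<exists>w\<in>V x. mv_div (\<lambda>y. wedge (vec_mv (v i y)) (vec_mv (v j y))) x = vec_mv w)"
    if i: "i \<in> {1..k}" and j: "j \<in> {1..k}" for i j
  proof -
    define d where "d = vf_div (v i) x *\<^sub>R v j x - vf_div (v j) x *\<^sub>R v i x"
    have "d \<in> V x"
      using frame_in_distribution[OF x] subspace_distribution[OF x] i j
      unfolding d_def by (simp add: subspace_diff subspace_scale)
    then have "d - lie_bracket (v i) (v j) x \<in> V x \<longleftrightarrow> lie_bracket (v i) (v j) x \<in> V x"
      using subspace_diff[OF subspace_distribution[OF x], of d] by force
    then show ?thesis
      using mv_div_wedge_pair[OF frame_differentiable[OF x i] frame_differentiable[OF x j]]
      unfolding d_def by auto
  qed
  then show ?thesis by blast
qed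

lemma homogeneous_div_frame_wedge: "x \<in> \<Omega> \<Longrightarrow> homogeneous (k - 1) (div_frame_wedge x)"
  using homogeneous_div_wedge_fields[of "[1..<k+1]" v x] frame_differentiable by auto

lemma div_frame_wedge_in_Lambda:
  "x \<in> \<Omega> \<Longrightarrow> brackets_in_distribution x \<Longrightarrow> div_frame_wedge x \<in> Lambda (k - 1) (V x)"
  using div_wedge_fields_in_Lambda[of "[1..<k+1]" v x "V x"] frame_differentiable
    subspace_distribution frame_in_distribution by auto

lemma brackets_iff_contract_vec:
  assumes x: "x \<in> \<Omega>"
  shows "brackets_in_distribution x \<longleftrightarrow> (\<forall>J. contract_vec (div_frame_wedge x) J \<in> V x)"
proof -
  have "brackets_in_distribution x \<longleftrightarrow>
      (\<forall>\<gamma>\<in>(V x)\<^sup>\<bottom>. mv_interior (div_frame_wedge x) (vec_mv \<gamma>) = 0)"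
  proof
    assume "brackets_in_distribution x"
    then show "\<forall>\<gamma>\<in>(V x)\<^sup>\<bottom>. mv_interior (div_frame_wedge x) (vec_mv \<gamma>) = 0"
      using div_frame_wedge_in_Lambda[OF x] interior_eq_0_if_in_Lambda by blast
  next
    assume interior0: "\<forall>\<gamma>\<in>(V x)\<^sup>\<bottom>. mv_interior (div_frame_wedge x) (vec_mv \<gamma>) = 0"
    have frame_set: "set [1..<k+1] = {1..k}" by auto
    have "\<forall>p\<in>{1..k}. \<forall>q\<in>{1..k}. lie_bracket (v p) (v q) x \<bullet> \<gamma> = 0" if "\<gamma> \<in> (V x)\<^sup>\<bottom>" for \<gamma>
      by (rule interior_div_wedge_fields_eq_0D[of "[1..<k+1]" v x \<gamma>, unfolded frame_set])
         (use that interior0 frame_differentiable[OF x] frame_orthogonal[OF x]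
           frame_has_dual_family[OF x] in auto)
    then show "brackets_in_distribution x"
      by (auto simp: mem_subspace_iff_orthogonal_comp[OF subspace_distribution[OF x]] inner_commute)
  qed
  then show ?thesis by (simp add: interior_orthogonal_comp_eq_0_iff[OF subspace_distribution[OF x]])
qed

lemma brackets_iff_mv_span_subset:
  assumes x: "x \<in> \<Omega>"
  shows "brackets_in_distribution x \<longleftrightarrow> mv_span (k - 1) (div_frame_wedge x) \<subseteq> V x"
  using div_frame_wedge_in_Lambda[OF x] subspace_distribution[OF x] contract_vec_in_mv_span
    brackets_iff_contract_vec[OF x]
  unfolding mv_span_def by blast

lemma brackets_iff_wedge_interior_dxI:
  assumes x: "x \<in> \<Omega>"
  shows "brackets_in_distribution x \<longleftrightarrow>
    (\<forall>I. card I + 2 = k \<longrightarrow> wedge (frame_wedge x) (mv_interior (div_frame_wedge x) (dxI I)) = 0)"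
proof -
  have frame_set: "set [1..<k+1] = {1..k}" by auto
  have "card I + 2 = k \<longleftrightarrow> card I + 1 = k - 1" for I :: "'n set" by auto
  then have "(\<forall>I. card I + 2 = k \<longrightarrow> wedge (frame_wedge x) (mv_interior (div_frame_wedge x) (dxI I)) = 0)
      \<longleftrightarrow> (\<forall>I. card I + 1 = k - 1 \<longrightarrow> wedge (frame_wedge x) (mv_interior (div_frame_wedge x) (dxI I)) = 0)"
    by simp
  also have "\<dots> \<longleftrightarrow> (\<forall>J. contract_vec (div_frame_wedge x) J \<in> span ((\<lambda>i. v i x) ` set [1..<k+1]))"
    by (rule wedge_interior_dxI_eq_0_iff[OF homogeneous_div_frame_wedge[OF x] distinct_upt])
       (unfold frame_set, rule frame_has_dual_family[OF x])
  also have "span ((\<lambda>i. v i x) ` set [1..<k+1]) = V x"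
    using distribution_span x unfolding frame_set by simp
  finally show ?thesis using brackets_iff_contract_vec[OF x] by blast
qed

end

theorem corollary2:
  fixes \<Omega> :: "(real ^ 'n::{finite,linorder}) set"
    and v :: "nat \<Rightarrow> real ^ 'n::{finite,linorder} \<Rightarrow> real ^ 'n::{finite,linorder}"
    and V :: "real ^ 'n::{finite,linorder} \<Rightarrow> (real ^ 'n::{finite,linorder}) set"
    and k :: nat and x :: "real ^ 'n::{finite,linorder}"
  assumes "open \<Omega>"
    and "\<forall>i\<in>{1..k}. C1_on \<Omega> (v i)"
    and "\<forall>y\<in>\<Omega>. \<forall>c::nat \<Rightarrow> real. (\<Sum>i=1..k. c i *\<^sub>R v i y) = 0 \<longrightarrow> (\<forall>i\<in>{1..k}. c i = 0)"
    and "\<forall>y\<in>\<Omega>. V y = span ((\<lambda>i. v i y) ` {1..k})"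
    and "x \<in> \<Omega>"
  shows "(involutive_at \<Omega> V x \<longleftrightarrow>
            (\<forall>i\<in>{1..k}. \<forall>j\<in>{1..k}. lie_bracket (v i) (v j) x \<in> V x))
       \<and> ((\<forall>i\<in>{1..k}. \<forall>j\<in>{1..k}. lie_bracket (v i) (v j) x \<in> V x) \<longleftrightarrow>
            (\<forall>i\<in>{1..k}. \<forall>j\<in>{1..k}. \<exists>w\<in>V x.
               mv_div (\<lambda>y. wedge (vec_mv (v i y)) (vec_mv (v j y))) x = vec_mv w))
       \<and> (involutive_at \<Omega> V x \<longleftrightarrow>
            mv_span (k - 1) (mv_div (\<lambda>y. wedge_list (map (\<lambda>i. vec_mv (v i y)) [1..<k+1])) x) \<subseteq> V x)
       \<and> (involutive_at \<Omega> V x \<longleftrightarrow>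
            (\<forall>I. card I + 2 = k \<longrightarrow>
               wedge (wedge_list (map (\<lambda>i. vec_mv (v i x)) [1..<k+1]))
                 (mv_interior (mv_div (\<lambda>y. wedge_list (map (\<lambda>i. vec_mv (v i y)) [1..<k+1])) x) (dxI I))
               = 0))"
proof -
  interpret frame_distribution \<Omega> v V k
    using assms(1-4) by unfold_locales
  show ?thesis
    using involutive_at_iff_brackets brackets_iff_div_pairs brackets_iff_mv_span_subset
      brackets_iff_wedge_interior_dxI assms(5)
    unfolding div_wedge_fields_def wedge_vecs_def by blast
qed

end
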